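(* Let $m,n\in\mathbb{N}$, $q\in(-1,1)\setminus\{0\}$, and $p_\pm,q_\pm\in(-1,1)\setminus\{0\}$ (so that $\alpha_\pm=p_\pm q_\pm$, $\beta_\pm=p_\pm+q_\pm$). (i) For every $\kappa\in\Lambda^{(m,n)}$ the system $$2n\xi_j+v_{p_+}(\xi_j)+v_{q_+}(\xi_j)+v_{p_-}(\xi_j)+v_{q_-}(\xi_j)+\sum_{1\le k\le m,\,k\ne j}\bigl(v_q(\xi_j+\xi_k)+v_q(\xi_j-\xi_k)\bigr)=2\pi(m+1-j+\kappa_j),\quad j=1,\dots,m,$$ has a unique solution $\xi_\kappa\in\mathbb{R}^m$, and $\xi_\kappa$ is the global minimum of the strictly convex, radially unbounded Morse function $V_\kappa$. (ii) The points $\xi_\kappa$, $\kappa\in\Lambda^{(m,n)}$, are pairwise distinct and lie in the open alcove $\mathbb{A}^m=\{\xi\in\mathbb{R}^m\mid\pi>\xi_1>\xi_2>\cdots>\xi_m>0\}$. Moreover, $\xi=\xi_\kappa$ satisfies $$\frac{\pi(m+1-j+\kappa_j)}{n+K_+}\le\xi_j\le\frac{\pi(m+1-j+\kappa_j)}{n+K_-}\quad(1\le j\le m),$$ $$\frac{\pi(k-j+\kappa_j-\kappa_k)}{n+K_+}\le\xi_j-\xi_k\le\frac{\pi(k-j+\kappa_j-\kappa_k)}{n+K_-}\quad(1\le j<k\le m),$$ where $K_\pm=(m-1)\left(\frac{1+|q|}{1-|q|}\right)^{\pm1}+\frac12\left(\left(\frac{1+|p_+|}{1-|p_+|}\ri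ght)^{\pm1}+\left(\frac{1+|q_+|}{1-|q_+|}\right)^{\pm1}+\left(\frac{1+|p_-|}{1-|p_-|}\right)^{\pm1}+\left(\frac{1+|q_-|}{1-|q_-|}\right)^{\pm1}\right)$.
   Context: $\Lambda^{(m,n)}=\{\kappa\in\mathbb{Z}^m\mid n\ge\kappa_1\ge\kappa_2\ge\cdots\ge\kappa_m\ge0\}$. For $-1<a<1$, $v_a(z)=\int_0^z\frac{(1-a^2)\,dx}{1-2a\cos(x)+a^2}$. For $\kappa\in\Lambda^{(m,n)}$, $V_\kappa(\xi_1,\dots,\xi_m)=\sum_{1\le j<k\le m}\Bigl(\int_0^{\xi_j+\xi_k}v_q(x)\,dx+\int_0^{\xi_j-\xi_k}v_q(x)\,dx\Bigr)+\sum_{1\le j\le m}\Bigl(n\xi_j^2-2\pi(m+1-j+\kappa_j)\xi_j+\int_0^{\xi_j}\bigl(v_{p_+}(x)+v_{q_+}(x)+v_{p_-}(x)+v_{q_-}(x)\bigr)dx\Bigr)$. *)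

theory Defs
  imports "HOL-Analysis.Analysis"
begin

text \<open>Points of R^m are modelled as functions nat => real supported on {1..m}.\<close>

definition Rm :: "nat \<Rightarrow> (nat \<Rightarrow> real) set" where
  "Rm m = {\<xi>. \<forall>j. j \<notin> {1..m} \<longrightarrow> \<xi> j = 0}"

definition Lambda :: "nat \<Rightarrow> nat \<Rightarrow> (nat \<Rightarrow> nat) set" where
  "Lambda m n = {\<kappa>. (\<forall>j\<in>{1..m}. \<kappa> j \<le> n)
                    \<and> (\<forall>j k. 1 \<le> j \<longrightarrow> j \<le> k \<longrightarrow> k \<le> m \<longrightarrow> \<kappa> k \<le> \<kappa> j)
                    \<and> (\<forall>j. j \<notin> {1..m} \<longrightarrow> \<kappa> j = 0)}"

definition oint :: "(real \<Rightarrow> real) \<Rightarrow> real \<Rightarrow> real \<Rightarrow> real" where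
  "oint f a b = (if a \<le> b then integral {a..b} f else - integral {b..a} f)"

definition vfun :: "real \<Rightarrow> real \<Rightarrow> real" where
  "vfun a z = oint (\<lambda>x. (1 - a\<^sup>2) / (1 - 2 * a * cos x + a\<^sup>2)) 0 z"

definition Vfun :: "nat \<Rightarrow> nat \<Rightarrow> real \<Rightarrow> real \<Rightarrow> real \<Rightarrow> real \<Rightarrow> real \<Rightarrow> (nat \<Rightarrow> nat)
                     \<Rightarrow> (nat \<Rightarrow> real) \<Rightarrow> real" where
  "Vfun m n q pp qp pm qm \<kappa> \<xi> =
     (\<Sum>j=1..m. \<Sum>k=Suc j..m.
        oint (vfun q) 0 (\<xi> j + \<xi> k) + oint (vfun q) 0 (\<xi> j - \<xi> k))
   + (\<Sum>j=1..m. real n * (\<xi> j)\<^sup>2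
        - 2 * pi * (real m + 1 - real j + real (\<kappa> j)) * \<xi> j
        + oint (\<lambda>x. vfun pp x + vfun qp x + vfun pm x + vfun qm x) 0 (\<xi> j))"

definition BAE :: "nat \<Rightarrow> nat \<Rightarrow> real \<Rightarrow> real \<Rightarrow> real \<Rightarrow> real \<Rightarrow> real \<Rightarrow> (nat \<Rightarrow> nat)
                     \<Rightarrow> (nat \<Rightarrow> real) \<Rightarrow> bool" where
  "BAE m n q pp qp pm qm \<kappa> \<xi> \<longleftrightarrow>
     (\<forall>j\<in>{1..m}. 2 * real n * \<xi> j + vfun pp (\<xi> j) + vfun qp (\<xi> j) + vfun pm (\<xi> j) + vfun qm (\<xi> j)
        + (\<Sum>k\<in>{1..m} - {j}. vfun q (\<xi> j + \<xi> k) + vfun q (\<xi> j - \<xi> k))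
        = 2 * pi * (real m + 1 - real j + real (\<kappa> j)))"

definition strictly_convex_Rm :: "nat \<Rightarrow> ((nat \<Rightarrow> real) \<Rightarrow> real) \<Rightarrow> bool" where
  "strictly_convex_Rm m f \<longleftrightarrow>
     (\<forall>x\<in>Rm m. \<forall>y\<in>Rm m. \<forall>t::real. x \<noteq> y \<longrightarrow> 0 < t \<longrightarrow> t < 1 \<longrightarrow>
        f (\<lambda>i. (1 - t) * x i + t * y i) < (1 - t) * f x + t * f y)"

definition eucl_norm :: "nat \<Rightarrow> (nat \<Rightarrow> real) \<Rightarrow> real" where
  "eucl_norm m \<xi> = sqrt (\<Sum>j=1..m. (\<xi> j)\<^sup>2)"

definition radially_unbounded_Rm :: "nat \<Rightarrow> ((nat \<Rightarrow> real) \<Rightarrow> real) \<Rightarrow> bool" where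
  "radially_unbounded_Rm m f \<longleftrightarrow>
     (\<forall>B. \<exists>R. \<forall>\<xi>\<in>Rm m. eucl_norm m \<xi> \<ge> R \<longrightarrow> f \<xi> \<ge> B)"

definition pd :: "((nat \<Rightarrow> real) \<Rightarrow> real) \<Rightarrow> (nat \<Rightarrow> real) \<Rightarrow> nat \<Rightarrow> real" where
  "pd f \<xi> j = deriv (\<lambda>t. f (\<xi>(j := t))) (\<xi> j)"

definition hess :: "((nat \<Rightarrow> real) \<Rightarrow> real) \<Rightarrow> (nat \<Rightarrow> real) \<Rightarrow> nat \<Rightarrow> nat \<Rightarrow> real" where
  "hess f \<xi> j k = pd (\<lambda>\<eta>. pd f \<eta> k) \<xi> j"

definition C2_Rm :: "nat \<Rightarrow> ((nat \<Rightarrow> real) \<Rightarrow> real) \<Rightarrow> bool" where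
  "C2_Rm m f \<longleftrightarrow>
     (\<forall>\<xi>\<in>Rm m. \<forall>j\<in>{1..m}. (\<lambda>t. f (\<xi>(j := t))) differentiable (at (\<xi> j))
        \<and> (\<forall>k\<in>{1..m}. (\<lambda>t. pd f (\<xi>(j := t)) k) differentiable (at (\<xi> j))))
   \<and> (\<forall>j\<in>{1..m}. continuous_on (Rm m) (\<lambda>\<xi>. pd f \<xi> j))
   \<and> (\<forall>j\<in>{1..m}. \<forall>k\<in>{1..m}. continuous_on (Rm m) (\<lambda>\<xi>. hess f \<xi> j k))"

definition morse_Rm :: "nat \<Rightarrow> ((nat \<Rightarrow> real) \<Rightarrow> real) \<Rightarrow> bool" where
  "morse_Rm m f \<longleftrightarrow> C2_Rm m f \<and>
     (\<forall>\<xi>\<in>Rm m. (\<forall>j\<in>{1..m}. pd f \<xi> j = 0) \<longrightarrow>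
        (\<forall>h\<in>Rm m. (\<forall>j\<in>{1..m}. (\<Sum>k=1..m. hess f \<xi> j k * h k) = 0) \<longrightarrow> h = (\<lambda>_. 0)))"

definition ratio :: "real \<Rightarrow> real" where
  "ratio a = (1 + \<bar>a\<bar>) / (1 - \<bar>a\<bar>)"

definition Kplus :: "nat \<Rightarrow> real \<Rightarrow> real \<Rightarrow> real \<Rightarrow> real \<Rightarrow> real \<Rightarrow> real" where
  "Kplus m q pp qp pm qm = (real m - 1) * ratio q
     + (ratio pp + ratio qp + ratio pm + ratio qm) / 2"

definition Kminus :: "nat \<Rightarrow> real \<Rightarrow> real \<Rightarrow> real \<Rightarrow> real \<Rightarrow> real \<Rightarrow> real" where
  "Kminus m q pp qp pm qm = (real m - 1) * inverse (ratio q)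
     + (inverse (ratio pp) + inverse (ratio qp) + inverse (ratio pm) + inverse (ratio qm)) / 2"

end

theory Submission
  imports Defs
begin

text \<open>
  Write \<open>V\<^sub>\<kappa>(\<xi>)\<close> as a sum of pair terms \<open>\<Phi>(\<xi>\<^sub>j \<plusminus> \<xi>\<^sub>k)\<close>, where \<open>\<Phi>' = v\<^sub>q\<close>, and of
  one-variable terms whose derivatives \<open>2n\<xi> - 2\<pi>c + \<Sum> v\<^sub>p\<^sub>\<plusminus>(\<xi>) + v\<^sub>q\<^sub>\<plusminus>(\<xi>)\<close> are strictly
  increasing. This works because \<open>v\<^sub>a'\<close> is the Poisson kernel, which lies between
  \<open>(1 - |a|)/(1 + |a|)\<close> and its inverse; in closed form
  \<open>v\<^sub>a(x) = x + 2 arctan (a sin x / (1 - a cos x))\<close>, which is odd and satisfies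
  \<open>v\<^sub>a(\<pi> + y) + v\<^sub>a(\<pi> - y) = 2\<pi>\<close>. Hence \<open>V\<^sub>\<kappa>\<close> lies strictly above its tangent planes. That
  gives strict convexity, and it shows that the critical points (which are the solutions of
  the equations) are global minima, so there is at most one. A quadratic lower bound makes
  \<open>V\<^sub>\<kappa>\<close> radially unbounded, so a minimum, and hence a solution, exists. The Hessian quadratic
  form is \<open>\<Sum>\<^sub>k (2n + W'(\<xi>\<^sub>k)) h\<^sub>k\<^sup>2\<close> plus a non-negative sum of squares weighted by the
  Poisson kernel of \<open>q\<close>, so the Hessian is positive definite. Finally, the localisation
  bounds follow from reading each equation, and the difference of two equations, through
  the slope bounds of the \<open>v\<^sub>a\<close>.
\<close>

lemma continuous_on_compose_UNIV: "continuous_on UNIV g \<Longrightarrow> continuous_on S f \<Longrightarrow> continuous_on S (\<lambda>x. g (f x))"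
  using continuous_on_compose2[of UNIV g S f] by simp

lemma DERIV_imp_continuous_on_UNIV:
  "(\<And>x. (g has_real_derivative g' x) (at x)) \<Longrightarrow> continuous_on UNIV g"
  by (meson DERIV_isCont continuous_at_imp_continuous_on)

lemma DERIV_bounds_imp_diff_bounds:
  fixes f f' :: "real \<Rightarrow> real"
  assumes "\<And>x. (f has_real_derivative f' x) (at x)"
    and "\<And>x. lo \<le> f' x" "\<And>x. f' x \<le> hi" and "y \<le> x"
  shows "lo * (x - y) \<le> f x - f y \<and> f x - f y \<le> hi * (x - y)"
proof (cases "y = x")
  case False
  with \<open>y \<le> x\<close> obtain z where "f x - f y = (x - y) * f' z"
    using MVT2[of y x f f'] assms(1) by force
  moreover have "lo * (x - y) \<le> (x - y) * f' z" "(x - y) * f' z \<le> hi * (x - y)"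
    using assms(2,3)[of z] \<open>y \<le> x\<close> by (simp_all add: mult.commute mult_right_mono)
  ultimately show ?thesis by simp
qed simp

lemma DERIV_strict_mono_strictly_above_tangent:
  fixes F f :: "real \<Rightarrow> real"
  assumes deriv: "\<And>x. (F has_real_derivative f x) (at x)" and "strict_mono f" and "x \<noteq> y"
  shows "F x + f x * (y - x) < F y"
proof (cases "x < y")
  case True
  then obtain z where "x < z" "F y - F x = (y - x) * f z"
    using MVT2[of x y F f] deriv by blast
  moreover have "(y - x) * f x < (y - x) * f z"
    using True \<open>x < z\<close> \<open>strict_mono f\<close> by (simp add: strict_monoD)
  ultimately show ?thesis by (simp add: mult.commute)
next
  case False
  with \<open>x \<noteq> y\<close> have "y < x" by simp
  then obtain z where "z < x" "F x - F y = (x - y) * f z"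
    using MVT2[of y x F f] deriv by blast
  moreover have "(x - y) * f z < (x - y) * f x"
    using \<open>y < x\<close> \<open>z < x\<close> \<open>strict_mono f\<close> by (simp add: strict_monoD)
  ultimately show ?thesis by (simp add: algebra_simps)
qed

lemma DERIV_strict_mono_above_tangent:
  fixes F f :: "real \<Rightarrow> real"
  assumes "\<And>x. (F has_real_derivative f x) (at x)" and "strict_mono f"
  shows "F x + f x * (y - x) \<le> F y"
  using DERIV_strict_mono_strictly_above_tangent[OF assms] by (cases "x = y") (auto intro: less_imp_le)

lemma oint_same [simp]: "oint f a a = 0"
  by (simp add: oint_def)

lemma oint_has_real_derivative:
  fixes f :: "real \<Rightarrow> real"
  assumes "continuous_on UNIV f"
  shows "((\<lambda>z. oint f c z) has_real_derivative f x) (at x)"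
proof -
  define a where "a = min c x - 1"
  define b where "b = max c x + 1"
  have integrable: "f integrable_on {u..v}" for u v
    using assms by (intro integrable_continuous_real) (rule continuous_on_subset, auto)
  have eq: "integral {a..u} f - integral {a..c} f = oint f c u" if "u \<in> {a<..<b}" for u
  proof (cases "c \<le> u")
    case True
    then have "integral {a..c} f + integral {c..u} f = integral {a..u} f"
      using that integrable by (intro Henstock_Kurzweil_Integration.integral_combine) (auto simp: a_def)
    then show ?thesis using True by (simp add: oint_def)
  next
    case False
    then have "integral {a..u} f + integral {u..c} f = integral {a..c} f"
      using that integrable by (intro Henstock_Kurzweil_Integration.integral_combine) (auto simp: a_def)
    then show ?thesis using False by (simp add: oint_def)
  qed
  have x: "x \<in> {a..b}" "x \<in> {a<..<b}"
    by (auto simp: a_def b_def)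
  have "((\<lambda>u. integral {a..u} f) has_real_derivative f x) (at x)"
    using integral_has_real_derivative[OF continuous_on_subset[OF assms] x(1)]
      at_within_interior[of x "{a..b}"] x(2) by simp
  then have "((\<lambda>u. integral {a..u} f - integral {a..c} f) has_real_derivative f x) (at x)"
    using DERIV_diff[OF _ DERIV_const] by fastforce
  then show ?thesis
    by (rule has_field_derivative_transform_within_open[of _ _ _ "{a<..<b}"]) (use eq x in auto)
qed

lemma oint_eq_diff:
  assumes "\<And>x. (F has_real_derivative f x) (at x)"
  shows "oint f a b = F b - F a"
proof -
  have "integral {u..v} f = F v - F u" if "u \<le> v" for u v
    using fundamental_theorem_of_calculus[OF that, of F f] assms
    by (auto simp: has_real_derivative_iff_has_vector_derivative[symmetric]
        intro: has_field_derivative_at_within)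
  then show ?thesis
    unfolding oint_def by auto
qed

lemma quadratic_minus_linear_lower_bound:
  fixes s K :: real
  assumes "0 < \<alpha>"
  shows "\<alpha> / 2 * s\<^sup>2 - K\<^sup>2 / (2 * \<alpha>) \<le> \<alpha> * s\<^sup>2 - K * \<bar>s\<bar>"
proof -
  have "0 \<le> (\<alpha> * \<bar>s\<bar> - K)\<^sup>2 / (2 * \<alpha>)"
    using assms by simp
  also have "\<dots> = \<alpha> * s\<^sup>2 - K * \<bar>s\<bar> - (\<alpha> / 2 * s\<^sup>2 - K\<^sup>2 / (2 * \<alpha>))"
    using assms by (simp add: power2_eq_square field_simps)
  finally show ?thesis by simp
qed

lemma divide_bounds_of_mult_bounds:
  fixes lo hi t x :: real
  assumes "0 < lo" "0 < hi" "lo * t \<le> x" "x \<le> hi * t"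
  shows "x / hi \<le> t \<and> t \<le> x / lo"
  using assms by (simp add: pos_divide_le_eq pos_le_divide_eq mult.commute)

section \<open>The functions \<open>v\<^sub>a\<close> in closed form\<close>

definition poisson_kernel :: "real \<Rightarrow> real \<Rightarrow> real" where
  "poisson_kernel a x = (1 - a\<^sup>2) / (1 - 2 * a * cos x + a\<^sup>2)"

definition v_arctan :: "real \<Rightarrow> real \<Rightarrow> real" where
  "v_arctan a x = x + 2 * arctan (a * sin x / (1 - a * cos x))"

lemma abs_mult_cos_le: "\<bar>a * cos x\<bar> \<le> \<bar>a :: real\<bar>"
  unfolding abs_mult by (metis abs_cos_le_one abs_ge_zero mult_left_le)

lemma poisson_denominator_bounds:
  fixes a x :: real
  shows "(1 - \<bar>a\<bar>)\<^sup>2 \<le> 1 - 2 * a * cos x + a\<^sup>2" "1 - 2 * a * cos x + a\<^sup>2 \<le> (1 + \<bar>a\<bar>)\<^sup>2"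
proof -
  have "- \<bar>a\<bar> \<le> a * cos x" "a * cos x \<le> \<bar>a\<bar>"
    using abs_mult_cos_le[of a x] by linarith+
  moreover have "a\<^sup>2 = \<bar>a\<bar>\<^sup>2" by simp
  ultimately show "(1 - \<bar>a\<bar>)\<^sup>2 \<le> 1 - 2 * a * cos x + a\<^sup>2" "1 - 2 * a * cos x + a\<^sup>2 \<le> (1 + \<bar>a\<bar>)\<^sup>2"
    by (simp_all add: power2_eq_square algebra_simps)
qed

lemma poisson_kernel_bounds:
  fixes a x :: real
  assumes "\<bar>a\<bar> < 1"
  shows "inverse (ratio a) \<le> poisson_kernel a x" "poisson_kernel a x \<le> ratio a"
    "0 < poisson_kernel a x"
proof -
  note denom = poisson_denominator_bounds[of a x]
  have num: "1 - a\<^sup>2 = (1 - \<bar>a\<bar>) * (1 + \<bar>a\<bar>)"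
    by (simp add: power2_eq_square algebra_simps)
  have pos: "0 < 1 - \<bar>a\<bar>" "0 < 1 + \<bar>a\<bar>" "0 < 1 - a\<^sup>2"
    using assms by (simp_all add: num)
  have denom_pos: "0 < 1 - 2 * a * cos x + a\<^sup>2"
    using denom(1) pos(1) by (smt (verit) zero_less_power)
  show "0 < poisson_kernel a x"
    unfolding poisson_kernel_def using denom_pos pos by simp
  have "poisson_kernel a x \<le> (1 - a\<^sup>2) / (1 - \<bar>a\<bar>)\<^sup>2"
    unfolding poisson_kernel_def using denom denom_pos pos by (intro divide_left_mono) auto
  also have "\<dots> = ratio a"
    unfolding num ratio_def using pos by (simp add: power2_eq_square)
  finally show "poisson_kernel a x \<le> ratio a" .
  have "inverse (ratio a) = (1 - a\<^sup>2) / (1 + \<bar>a\<bar>)\<^sup>2"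
    unfolding num ratio_def using pos by (simp add: power2_eq_square)
  also have "\<dots> \<le> poisson_kernel a x"
    unfolding poisson_kernel_def using denom denom_pos pos by (intro divide_left_mono) auto
  finally show "inverse (ratio a) \<le> poisson_kernel a x" .
qed

lemma ratio_pos: "\<bar>a\<bar> < 1 \<Longrightarrow> 0 < ratio a"
  unfolding ratio_def by simp

lemma v_arctan_has_real_derivative:
  fixes a x :: real
  assumes "\<bar>a\<bar> < 1"
  shows "(v_arctan a has_real_derivative poisson_kernel a x) (at x)"
proof -
  define c where "c = 1 - a * cos x"
  define D where "D = 1 - 2 * a * cos x + a\<^sup>2"
  have c: "0 < c"
    using abs_mult_cos_le[of a x] assms by (simp add: c_def)
  have D: "c\<^sup>2 + (a * sin x)\<^sup>2 = D"
    unfolding c_def D_def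
    by (simp add: power2_eq_square algebra_simps) (metis sin_cos_squared_add3 distrib_left mult_1_right)
  have D_pos: "0 < D"
    using D c by (smt (verit) zero_le_power2 zero_less_power)
  have numerator: "a * cos x * c - a * sin x * (a * sin x) = a * cos x - a\<^sup>2"
    unfolding c_def
    by (simp add: power2_eq_square algebra_simps) (metis sin_cos_squared_add3 distrib_left mult_1_right)
  have "((\<lambda>x. a * sin x / (1 - a * cos x)) has_real_derivative
      (a * cos x * c - a * sin x * (a * sin x)) / c\<^sup>2) (at x)"
    using c unfolding c_def by (auto intro!: derivative_eq_intros simp: power2_eq_square)
  then have "((\<lambda>x. a * sin x / (1 - a * cos x)) has_real_derivative (a * cos x - a\<^sup>2) / c\<^sup>2) (at x)"
    unfolding numerator .
  from DERIV_chain2[OF DERIV_arctan this]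
  have "((\<lambda>x. arctan (a * sin x / (1 - a * cos x))) has_real_derivative
      inverse (1 + (a * sin x / c)\<^sup>2) * ((a * cos x - a\<^sup>2) / c\<^sup>2)) (at x)"
    by (simp add: c_def)
  moreover have "inverse (1 + (a * sin x / c)\<^sup>2) = c\<^sup>2 / D"
    using c by (simp add: D[symmetric] field_simps)
  ultimately have "((\<lambda>x. arctan (a * sin x / (1 - a * cos x))) has_real_derivative (a * cos x - a\<^sup>2) / D) (at x)"
    using c by simp
  then have "(v_arctan a has_real_derivative 1 + 2 * ((a * cos x - a\<^sup>2) / D)) (at x)"
    unfolding v_arctan_def by (rule DERIV_add[OF DERIV_ident DERIV_cmult])
  moreover have "1 + 2 * ((a * cos x - a\<^sup>2) / D) = poisson_kernel a x"
    unfolding poisson_kernel_def D_def[symmetric] using D_pos by (simp add: field_simps D_def)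
  ultimately show ?thesis by simp
qed

lemma continuous_on_poisson_kernel: "\<bar>a\<bar> < 1 \<Longrightarrow> continuous_on UNIV (poisson_kernel a)"
  unfolding poisson_kernel_def using poisson_denominator_bounds(1)[of a]
  by (intro continuous_intros) (smt (verit) zero_less_power)

lemma continuous_on_v_arctan: "\<bar>a\<bar> < 1 \<Longrightarrow> continuous_on UNIV (v_arctan a)"
  by (rule DERIV_imp_continuous_on_UNIV[OF v_arctan_has_real_derivative])

lemma continuous_on_v_arctan_comp:
  "\<bar>a\<bar> < 1 \<Longrightarrow> continuous_on S f \<Longrightarrow> continuous_on S (\<lambda>x. v_arctan a (f x))"
  by (rule continuous_on_compose_UNIV[OF continuous_on_v_arctan])

lemma continuous_on_poisson_kernel_comp:
  "\<bar>a\<bar> < 1 \<Longrightarrow> continuous_on S f \<Longrightarrow> continuous_on S (\<lambda>x. poisson_kernel a (f x))"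
  by (rule continuous_on_compose_UNIV[OF continuous_on_poisson_kernel])

lemma poisson_kernel_even: "poisson_kernel a (- x) = poisson_kernel a x"
  by (simp add: poisson_kernel_def)

lemma v_arctan_0 [simp]: "v_arctan a 0 = 0"
  by (simp add: v_arctan_def)

lemma v_arctan_minus: "v_arctan a (- x) = - v_arctan a x"
  by (simp add: v_arctan_def arctan_minus[symmetric])

lemma v_arctan_pi_reflect: "v_arctan a (pi + y) + v_arctan a (pi - y) = 2 * pi"
proof -
  have "arctan (a * sin (pi + y) / (1 - a * cos (pi + y)))
      = - arctan (a * sin (pi - y) / (1 - a * cos (pi - y)))"
    by (simp add: arctan_minus[symmetric])
  then show ?thesis by (simp add: v_arctan_def)
qed

lemma v_arctan_pi [simp]: "v_arctan a pi = pi"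
  using v_arctan_pi_reflect[of a 0] by simp

lemma v_arctan_diff_bounds:
  assumes "\<bar>a\<bar> < 1" and "y \<le> x"
  shows "inverse (ratio a) * (x - y) \<le> v_arctan a x - v_arctan a y
    \<and> v_arctan a x - v_arctan a y \<le> ratio a * (x - y)"
  using DERIV_bounds_imp_diff_bounds[OF v_arctan_has_real_derivative[OF assms(1)]]
    poisson_kernel_bounds[OF assms(1)] assms(2) by blast

lemma v_arctan_strict_mono: "\<bar>a\<bar> < 1 \<Longrightarrow> strict_mono (v_arctan a)"
proof (rule strict_monoI)
  fix y x :: real
  assume "\<bar>a\<bar> < 1" "y < x"
  then have "0 < inverse (ratio a) * (x - y)"
    using ratio_pos by simp
  with v_arctan_diff_bounds[of a y x] \<open>\<bar>a\<bar> < 1\<close> \<open>y < x\<close> show "v_arctan a y < v_arctan a x"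
    by auto
qed

lemma vfun_eq_v_arctan: "\<bar>a\<bar> < 1 \<Longrightarrow> vfun a = v_arctan a"
proof
  fix z
  assume "\<bar>a\<bar> < 1"
  have "(\<lambda>x. (1 - a\<^sup>2) / (1 - 2 * a * cos x + a\<^sup>2)) = poisson_kernel a"
    by (simp add: fun_eq_iff poisson_kernel_def)
  then show "vfun a z = v_arctan a z"
    using oint_eq_diff[OF v_arctan_has_real_derivative[OF \<open>\<bar>a\<bar> < 1\<close>], of 0 z]
    by (simp add: vfun_def)
qed

definition kron :: "nat \<Rightarrow> nat \<Rightarrow> real" where
  "kron a j = (if a = j then 1 else 0)"

lemma kron_sym: "kron a j = kron j a"
  by (simp add: kron_def)

lemma has_real_derivative_fun_upd: "((\<lambda>t. (\<xi>(j := t)) a) has_real_derivative kron a j) (at s)"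
  by (cases "a = j") (auto simp: kron_def intro: DERIV_ident DERIV_const)

lemma sum_mult_kron: "finite A \<Longrightarrow> j \<in> A \<Longrightarrow> (\<Sum>a\<in>A. f a * kron a j) = f j"
  by (simp add: kron_def if_distrib cong: if_cong)

lemma sum_kron_mult: "finite A \<Longrightarrow> j \<in> A \<Longrightarrow> (\<Sum>a\<in>A. kron a j * f a) = f j"
  using sum_mult_kron[of A j f] by (simp add: mult.commute)

lemma sum_offdiag_eq_sum_pairs:
  fixes h :: "nat \<Rightarrow> nat \<Rightarrow> 'a::comm_monoid_add"
  shows "(\<Sum>a=1..m. \<Sum>k\<in>{1..m} - {a}. h a k) = (\<Sum>a=1..m. \<Sum>b=Suc a..m. h a b + h b a)"
proof -
  have split: "(\<Sum>k\<in>{1..m} - {a}. h a k) = (\<Sum>k=Suc a..m. h a k) + (\<Sum>k\<in>{1..m} \<inter> {..<a}. h a k)"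
    for a
  proof -
    have "{1..m} - {a} = {Suc a..m} \<union> ({1..m} \<inter> {..<a})" "{Suc a..m} \<inter> ({1..m} \<inter> {..<a}) = {}"
      by auto
    then show ?thesis by (simp add: sum.union_disjoint)
  qed
  have "(\<Sum>a=1..m. \<Sum>k\<in>{1..m} \<inter> {..<a}. h a k) = (\<Sum>(a, k)\<in>{(a, k). 1 \<le> k \<and> k < a \<and> a \<le> m}. h a k)"
    by (subst sum.Sigma) (auto intro!: sum.reindex_bij_witness[where i=id and j=id])
  also have "\<dots> = (\<Sum>(k, a)\<in>{(k, a). 1 \<le> k \<and> k < a \<and> a \<le> m}. h a k)"
    by (rule sum.reindex_bij_witness[where i=prod.swap and j=prod.swap]) auto
  also have "\<dots> = (\<Sum>k=1..m. \<Sum>a=Suc k..m. h a k)"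
    by (subst sum.Sigma) (auto intro!: sum.reindex_bij_witness[where i=id and j=id])
  finally have "(\<Sum>a=1..m. \<Sum>k\<in>{1..m} - {a}. h a k)
      = (\<Sum>a=1..m. \<Sum>b=Suc a..m. h a b) + (\<Sum>a=1..m. \<Sum>b=Suc a..m. h b a)"
    by (simp only: split sum.distrib)
  then show ?thesis
    by (simp only: sum.distrib)
qed

lemma sum_offdiag_swap:
  fixes f :: "nat \<Rightarrow> nat \<Rightarrow> 'a::comm_monoid_add"
  shows "(\<Sum>k=1..m. \<Sum>l\<in>{1..m} - {k}. f k l) = (\<Sum>k=1..m. \<Sum>l\<in>{1..m} - {k}. f l k)"
  unfolding sum_offdiag_eq_sum_pairs by (simp add: add.commute)

lemma real_card_Icc_Diff_singleton: "j \<in> {1..m} \<Longrightarrow> real (card ({1..m} - {j})) = real m - 1"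
  by (simp add: of_nat_diff)

lemma real_card_Icc_Diff_doubleton:
  "j \<in> {1..m} \<Longrightarrow> k \<in> {1..m} \<Longrightarrow> j \<noteq> k \<Longrightarrow> real (card ({1..m} - {j, k})) = real m - 2"
  by (simp add: card_Diff_subset of_nat_diff)

lemma Rm_eqI:
  assumes "x \<in> Rm m" "y \<in> Rm m" "\<And>a. a \<in> {1..m} \<Longrightarrow> x a = y a"
  shows "x = y"
proof
  show "x a = y a" for a
    using assms by (cases "a \<in> {1..m}") (auto simp: Rm_def)
qed

lemma Rm_fun_upd: "\<xi> \<in> Rm m \<Longrightarrow> j \<in> {1..m} \<Longrightarrow> \<xi>(j := t) \<in> Rm m"
  unfolding Rm_def by auto

lemma abs_le_eucl_norm: "i \<in> {1..m} \<Longrightarrow> \<bar>\<xi> i\<bar> \<le> eucl_norm m \<xi>"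
proof -
  assume "i \<in> {1..m}"
  then have "(\<xi> i)\<^sup>2 \<le> (\<Sum>a=1..m. (\<xi> a)\<^sup>2)"
    by (intro member_le_sum) auto
  then show ?thesis
    unfolding eucl_norm_def using real_sqrt_le_mono by fastforce
qed

lemma eucl_norm_power2: "(eucl_norm m \<xi>)\<^sup>2 = (\<Sum>a=1..m. (\<xi> a)\<^sup>2)"
  unfolding eucl_norm_def by (simp add: sum_nonneg)

lemma continuous_on_coordinate [continuous_intros]: "continuous_on S (\<lambda>x::nat \<Rightarrow> real. x i)"
  by (rule continuous_on_subset[OF continuous_on_product_coordinates]) simp

lemma compact_Pi_UNIV:
  assumes "\<And>i. compact (S i :: real set)"
  shows "compact (Pi UNIV S)"
proof -
  have "compactin (product_topology (\<lambda>i. euclidean) UNIV) (PiE UNIV S)"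
    using assms by (simp add: compactin_PiE)
  then show ?thesis by (simp add: euclidean_product_topology PiE_UNIV_domain)
qed

lemma radially_unbounded_Rm_attains_min:
  assumes cont: "continuous_on (Rm m) f" and unbounded: "radially_unbounded_Rm m f"
  shows "\<exists>x\<in>Rm m. \<forall>y\<in>Rm m. f x \<le> f y"
proof -
  obtain R where R: "\<And>\<xi>. \<xi> \<in> Rm m \<Longrightarrow> R \<le> eucl_norm m \<xi> \<Longrightarrow> f (\<lambda>_. 0) + 1 \<le> f \<xi>"
    using unbounded unfolding radially_unbounded_Rm_def by blast
  define S where "S i = (if i \<in> {1..m} then {-\<bar>R\<bar>..\<bar>R\<bar>} else {0::real})" for i
  define K where "K = Pi UNIV S"
  have "compact K"
    unfolding K_def S_def by (rule compact_Pi_UNIV) auto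
  moreover have K_Rm: "K \<subseteq> Rm m"
    by (force simp: K_def S_def Rm_def split: if_splits)
  moreover have zero_K: "(\<lambda>_. 0) \<in> K"
    by (simp add: K_def S_def)
  ultimately obtain x where x: "x \<in> K" "\<And>y. y \<in> K \<Longrightarrow> f x \<le> f y"
    using continuous_attains_inf[of K f] continuous_on_subset[OF cont] by blast
  have "f x \<le> f y" if "y \<in> Rm m" for y
  proof (cases "y \<in> K")
    case False
    then obtain i where "y i \<notin> S i"
      by (auto simp: K_def)
    with \<open>y \<in> Rm m\<close> have "i \<in> {1..m}" "\<bar>R\<bar> < \<bar>y i\<bar>"
      by (auto simp: S_def Rm_def split: if_splits)
    then have "R \<le> eucl_norm m y"
      using abs_le_eucl_norm[of i m y] by linarith
    then show ?thesis
      using R[OF that] x(2)[OF zero_K] by linarith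
  qed (use x in blast)
  then show ?thesis
    using x(1) K_Rm by blast
qed

lemma radially_unbounded_RmI:
  assumes "0 < \<alpha>" and bound: "\<And>\<xi>. \<xi> \<in> Rm m \<Longrightarrow> \<alpha> * (\<Sum>a=1..m. (\<xi> a)\<^sup>2) - \<beta> \<le> f \<xi>"
  shows "radially_unbounded_Rm m f"
  unfolding radially_unbounded_Rm_def
proof
  fix B
  define R where "R = sqrt ((\<bar>B\<bar> + \<bar>\<beta>\<bar>) / \<alpha>)"
  have "B \<le> f \<xi>" if "\<xi> \<in> Rm m" "R \<le> eucl_norm m \<xi>" for \<xi>
  proof -
    have "(\<bar>B\<bar> + \<bar>\<beta>\<bar>) / \<alpha> = R\<^sup>2"
      using \<open>0 < \<alpha>\<close> by (simp add: R_def)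
    also have "\<dots> \<le> (\<Sum>a=1..m. (\<xi> a)\<^sup>2)"
      unfolding eucl_norm_power2[symmetric] using that(2) \<open>0 < \<alpha>\<close>
      by (intro power_mono) (simp_all add: R_def)
    finally have "\<bar>B\<bar> + \<bar>\<beta>\<bar> \<le> \<alpha> * (\<Sum>a=1..m. (\<xi> a)\<^sup>2)"
      using \<open>0 < \<alpha>\<close> by (simp add: divide_le_eq mult.commute)
    then show ?thesis
      using bound[OF that(1)] by linarith
  qed
  then show "\<exists>R. \<forall>\<xi>\<in>Rm m. R \<le> eucl_norm m \<xi> \<longrightarrow> B \<le> f \<xi>"
    by blast
qed

lemma has_real_derivative_fun_upd_comp:
  assumes "\<And>x. (F has_real_derivative F' x) (at x)"
  shows "((\<lambda>t. F ((\<xi>(j := t)) a)) has_real_derivative F' (\<xi> a) * kron a j) (at (\<xi> j))"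
proof -
  have "((\<lambda>t. (\<xi>(j := t)) a) has_real_derivative kron a j) (at (\<xi> j))"
    by (rule has_real_derivative_fun_upd)
  from DERIV_chain2[OF assms this] show ?thesis by simp
qed

lemma has_real_derivative_fun_upd_add_comp:
  assumes "\<And>x. (F has_real_derivative F' x) (at x)"
  shows "((\<lambda>t. F ((\<xi>(j := t)) a + (\<xi>(j := t)) b)) has_real_derivative
    F' (\<xi> a + \<xi> b) * (kron a j + kron b j)) (at (\<xi> j))"
proof -
  have "((\<lambda>t. (\<xi>(j := t)) a + (\<xi>(j := t)) b) has_real_derivative kron a j + kron b j) (at (\<xi> j))"
    by (intro DERIV_add has_real_derivative_fun_upd)
  from DERIV_chain2[OF assms this] show ?thesis by simp
qed

lemma has_real_derivative_fun_upd_diff_comp: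
  assumes "\<And>x. (F has_real_derivative F' x) (at x)"
  shows "((\<lambda>t. F ((\<xi>(j := t)) a - (\<xi>(j := t)) b)) has_real_derivative
    F' (\<xi> a - \<xi> b) * (kron a j - kron b j)) (at (\<xi> j))"
proof -
  have "((\<lambda>t. (\<xi>(j := t)) a - (\<xi>(j := t)) b) has_real_derivative kron a j - kron b j) (at (\<xi> j))"
    by (intro DERIV_diff has_real_derivative_fun_upd)
  from DERIV_chain2[OF assms this] show ?thesis by simp
qed

section \<open>The potential \<open>V\<^sub>\<kappa>\<close>\<close>

locale bae_parameters =
  fixes m n :: nat and q pp qp pm qm :: real
  assumes abs_q: "\<bar>q\<bar> < 1" and abs_pp: "\<bar>pp\<bar> < 1" and abs_qp: "\<bar>qp\<bar> < 1"
    and abs_pm: "\<bar>pm\<bar> < 1" and abs_qm: "\<bar>qm\<bar> < 1"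
begin

abbreviation V :: "(nat \<Rightarrow> nat) \<Rightarrow> (nat \<Rightarrow> real) \<Rightarrow> real" where
  "V \<kappa> \<equiv> Vfun m n q pp qp pm qm \<kappa>"

abbreviation bae :: "(nat \<Rightarrow> nat) \<Rightarrow> (nat \<Rightarrow> real) \<Rightarrow> bool" where
  "bae \<kappa> \<equiv> BAE m n q pp qp pm qm \<kappa>"

abbreviation Phi :: "real \<Rightarrow> real" where
  "Phi \<equiv> oint (vfun q) 0"

abbreviation Psi :: "real \<Rightarrow> real" where
  "Psi \<equiv> oint (\<lambda>x. vfun pp x + vfun qp x + vfun pm x + vfun qm x) 0"

abbreviation rhs :: "(nat \<Rightarrow> nat) \<Rightarrow> nat \<Rightarrow> real" where
  "rhs \<kappa> j \<equiv> real m + 1 - real j + real (\<kappa> j)"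

definition W :: "real \<Rightarrow> real" where
  "W x = v_arctan pp x + v_arctan qp x + v_arctan pm x + v_arctan qm x"

definition W' :: "real \<Rightarrow> real" where
  "W' x = poisson_kernel pp x + poisson_kernel qp x + poisson_kernel pm x + poisson_kernel qm x"

definition W_slope_lo :: real where
  "W_slope_lo = inverse (ratio pp) + inverse (ratio qp) + inverse (ratio pm) + inverse (ratio qm)"

definition W_slope_hi :: real where
  "W_slope_hi = ratio pp + ratio qp + ratio pm + ratio qm"

definition self_energy :: "(nat \<Rightarrow> nat) \<Rightarrow> nat \<Rightarrow> real \<Rightarrow> real" where
  "self_energy \<kappa> j s = real n * s\<^sup>2 - 2 * pi * rhs \<kappa> j * s + Psi s"

definition self_energy' :: "(nat \<Rightarrow> nat) \<Rightarrow> nat \<Rightarrow> real \<Rightarrow> real" where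
  "self_energy' \<kappa> j s = 2 * real n * s + W s - 2 * pi * rhs \<kappa> j"

definition pair_energy :: "(nat \<Rightarrow> real) \<Rightarrow> real" where
  "pair_energy \<xi> = (\<Sum>a=1..m. \<Sum>b=Suc a..m. Phi (\<xi> a + \<xi> b) + Phi (\<xi> a - \<xi> b))"

definition pair_gradient :: "(nat \<Rightarrow> real) \<Rightarrow> nat \<Rightarrow> real" where
  "pair_gradient \<xi> j = (\<Sum>k\<in>{1..m} - {j}. v_arctan q (\<xi> j + \<xi> k) + v_arctan q (\<xi> j - \<xi> k))"

definition gradient :: "(nat \<Rightarrow> nat) \<Rightarrow> (nat \<Rightarrow> real) \<Rightarrow> nat \<Rightarrow> real" where
  "gradient \<kappa> \<xi> j = self_energy' \<kappa> j (\<xi> j) + pair_gradient \<xi> j"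

lemma vfun_q: "vfun q = v_arctan q"
  by (rule vfun_eq_v_arctan[OF abs_q])

lemma vfun_sum_eq_W: "(\<lambda>x. vfun pp x + vfun qp x + vfun pm x + vfun qm x) = W"
  using abs_pp abs_qp abs_pm abs_qm by (simp add: fun_eq_iff W_def vfun_eq_v_arctan)

lemma V_split: "V \<kappa> \<xi> = pair_energy \<xi> + (\<Sum>a=1..m. self_energy \<kappa> a (\<xi> a))"
  unfolding Vfun_def pair_energy_def self_energy_def by simp

lemma bae_iff_gradient: "bae \<kappa> \<xi> \<longleftrightarrow> (\<forall>j\<in>{1..m}. gradient \<kappa> \<xi> j = 0)"
  unfolding BAE_def gradient_def self_energy'_def pair_gradient_def vfun_q
  using abs_pp abs_qp abs_pm abs_qm by (simp add: W_def vfun_eq_v_arctan algebra_simps)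

lemma W_has_real_derivative: "(W has_real_derivative W' x) (at x)"
  unfolding W_def[abs_def] W'_def
  by (intro DERIV_add v_arctan_has_real_derivative abs_pp abs_qp abs_pm abs_qm)

lemma W_diff_bounds:
  assumes "y \<le> x"
  shows "W_slope_lo * (x - y) \<le> W x - W y \<and> W x - W y \<le> W_slope_hi * (x - y)"
  using v_arctan_diff_bounds[OF abs_pp assms] v_arctan_diff_bounds[OF abs_qp assms]
    v_arctan_diff_bounds[OF abs_pm assms] v_arctan_diff_bounds[OF abs_qm assms]
  unfolding W_def W_slope_lo_def W_slope_hi_def by (simp add: algebra_simps)

lemma W_slope_lo_pos: "0 < W_slope_lo"
  unfolding W_slope_lo_def using ratio_pos abs_pp abs_qp abs_pm abs_qm by (simp add: add_pos_pos)

lemma W_slope_hi_pos: "0 < W_slope_hi"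
  unfolding W_slope_hi_def using ratio_pos abs_pp abs_qp abs_pm abs_qm by (simp add: add_pos_pos)

lemma W_slope_lo_le_W': "W_slope_lo \<le> W' x"
  unfolding W_slope_lo_def W'_def
  using poisson_kernel_bounds(1) abs_pp abs_qp abs_pm abs_qm by (smt (verit))

lemma W_strict_mono: "strict_mono W"
  unfolding W_def using v_arctan_strict_mono abs_pp abs_qp abs_pm abs_qm
  by (intro strict_monoI add_strict_mono) (auto dest: strict_monoD)

lemma W_0 [simp]: "W 0 = 0"
  by (simp add: W_def)

lemma W_pi [simp]: "W pi = 4 * pi"
  by (simp add: W_def)

lemma v_q_mono: "y \<le> x \<Longrightarrow> v_arctan q y \<le> v_arctan q x"
  using v_arctan_strict_mono[OF abs_q] by (simp add: strict_mono_less_eq)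

lemma W_mono: "y \<le> x \<Longrightarrow> W y \<le> W x"
  using W_strict_mono by (simp add: strict_mono_less_eq)

lemma Phi_has_real_derivative: "(Phi has_real_derivative v_arctan q x) (at x)"
  unfolding vfun_q by (rule oint_has_real_derivative[OF continuous_on_v_arctan[OF abs_q]])

lemma Psi_has_real_derivative: "(Psi has_real_derivative W x) (at x)"
  unfolding vfun_sum_eq_W
  by (rule oint_has_real_derivative[OF DERIV_imp_continuous_on_UNIV[OF W_has_real_derivative]])

lemma self_energy_has_real_derivative: "(self_energy \<kappa> a has_real_derivative self_energy' \<kappa> a s) (at s)"
  unfolding self_energy_def[abs_def] self_energy'_def
  by (auto intro!: derivative_eq_intros Psi_has_real_derivative)

lemma self_energy'_strict_mono: "strict_mono (self_energy' \<kappa> a)"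
  unfolding self_energy'_def using W_strict_mono
  by (intro strict_monoI) (smt (verit, best) mult_left_mono of_nat_0_le_iff strict_monoD)

subsection \<open>Tangent inequality and convexity\<close>

lemma sum_pairs_eq_sum_pair_gradient:
  "(\<Sum>a=1..m. \<Sum>b=Suc a..m. v_arctan q (\<xi> a + \<xi> b) * (d a + d b) + v_arctan q (\<xi> a - \<xi> b) * (d a - d b))
    = (\<Sum>a=1..m. d a * pair_gradient \<xi> a)"
proof -
  have "(\<Sum>a=1..m. d a * pair_gradient \<xi> a)
      = (\<Sum>a=1..m. \<Sum>k\<in>{1..m} - {a}. d a * (v_arctan q (\<xi> a + \<xi> k) + v_arctan q (\<xi> a - \<xi> k)))"
    by (simp add: pair_gradient_def sum_distrib_left)
  also have "\<dots> = (\<Sum>a=1..m. \<Sum>b=Suc a..m. d a * (v_arctan q (\<xi> a + \<xi> b) + v_arctan q (\<xi> a - \<xi> b))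
      + d b * (v_arctan q (\<xi> b + \<xi> a) + v_arctan q (\<xi> b - \<xi> a)))"
    by (rule sum_offdiag_eq_sum_pairs)
  also have "\<dots> = (\<Sum>a=1..m. \<Sum>b=Suc a..m. v_arctan q (\<xi> a + \<xi> b) * (d a + d b)
      + v_arctan q (\<xi> a - \<xi> b) * (d a - d b))"
  proof (intro sum.cong refl)
    fix a b
    have "v_arctan q (\<xi> b - \<xi> a) = - v_arctan q (\<xi> a - \<xi> b)"
      using v_arctan_minus[of q "\<xi> a - \<xi> b"] by simp
    then show "d a * (v_arctan q (\<xi> a + \<xi> b) + v_arctan q (\<xi> a - \<xi> b))
        + d b * (v_arctan q (\<xi> b + \<xi> a) + v_arctan q (\<xi> b - \<xi> a))
      = v_arctan q (\<xi> a + \<xi> b) * (d a + d b) + v_arctan q (\<xi> a - \<xi> b) * (d a - d b)"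
      by (simp add: add.commute algebra_simps)
  qed
  finally show ?thesis ..
qed

lemma pair_energy_above_tangent:
  "pair_energy \<xi> + (\<Sum>a=1..m. (\<eta> a - \<xi> a) * pair_gradient \<xi> a) \<le> pair_energy \<eta>"
proof -
  note tangent = DERIV_strict_mono_above_tangent[OF Phi_has_real_derivative v_arctan_strict_mono[OF abs_q]]
  have "pair_energy \<xi> + (\<Sum>a=1..m. (\<eta> a - \<xi> a) * pair_gradient \<xi> a)
      = (\<Sum>a=1..m. \<Sum>b=Suc a..m. Phi (\<xi> a + \<xi> b) + Phi (\<xi> a - \<xi> b)
        + (v_arctan q (\<xi> a + \<xi> b) * ((\<eta> a - \<xi> a) + (\<eta> b - \<xi> b))
          + v_arctan q (\<xi> a - \<xi> b) * ((\<eta> a - \<xi> a) - (\<eta> b - \<xi> b))))"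
    unfolding pair_energy_def sum_pairs_eq_sum_pair_gradient[symmetric] by (simp only: sum.distrib)
  also have "\<dots> \<le> pair_energy \<eta>"
    unfolding pair_energy_def
  proof (intro sum_mono)
    fix a b
    have "(\<eta> a + \<eta> b) - (\<xi> a + \<xi> b) = (\<eta> a - \<xi> a) + (\<eta> b - \<xi> b)"
      "(\<eta> a - \<eta> b) - (\<xi> a - \<xi> b) = (\<eta> a - \<xi> a) - (\<eta> b - \<xi> b)"
      by simp_all
    then show "Phi (\<xi> a + \<xi> b) + Phi (\<xi> a - \<xi> b)
        + (v_arctan q (\<xi> a + \<xi> b) * ((\<eta> a - \<xi> a) + (\<eta> b - \<xi> b))
          + v_arctan q (\<xi> a - \<xi> b) * ((\<eta> a - \<xi> a) - (\<eta> b - \<xi> b)))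
      \<le> Phi (\<eta> a + \<eta> b) + Phi (\<eta> a - \<eta> b)"
      using tangent[of "\<xi> a + \<xi> b" "\<eta> a + \<eta> b"] tangent[of "\<xi> a - \<xi> b" "\<eta> a - \<eta> b"]
      by (simp only:)
  qed
  finally show ?thesis .
qed

lemma self_energies_above_tangent:
  assumes "\<xi> \<in> Rm m" "\<eta> \<in> Rm m" "\<xi> \<noteq> \<eta>"
  shows "(\<Sum>a=1..m. self_energy \<kappa> a (\<xi> a)) + (\<Sum>a=1..m. (\<eta> a - \<xi> a) * self_energy' \<kappa> a (\<xi> a))
    < (\<Sum>a=1..m. self_energy \<kappa> a (\<eta> a))"
proof -
  note tangent = DERIV_strict_mono_strictly_above_tangent[OF self_energy_has_real_derivative self_energy'_strict_mono]
  note tangent' = DERIV_strict_mono_above_tangent[OF self_energy_has_real_derivative self_energy'_strict_mono]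
  obtain a0 where "a0 \<in> {1..m}" "\<xi> a0 \<noteq> \<eta> a0"
    using Rm_eqI[OF assms(1,2)] assms(3) by blast
  then have "(\<Sum>a=1..m. self_energy \<kappa> a (\<xi> a) + self_energy' \<kappa> a (\<xi> a) * (\<eta> a - \<xi> a))
      < (\<Sum>a=1..m. self_energy \<kappa> a (\<eta> a))"
    by (intro sum_strict_mono_ex1) (auto intro: tangent tangent')
  then show ?thesis
    by (simp add: sum.distrib mult.commute)
qed

lemma V_above_tangent:
  assumes "\<xi> \<in> Rm m" "\<eta> \<in> Rm m" "\<xi> \<noteq> \<eta>"
  shows "V \<kappa> \<xi> + (\<Sum>a=1..m. (\<eta> a - \<xi> a) * gradient \<kappa> \<xi> a) < V \<kappa> \<eta>"
  using pair_energy_above_tangent[of \<xi> \<eta>] self_energies_above_tangent[OF assms, of \<kappa>]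
  unfolding V_split gradient_def by (simp add: distrib_left sum.distrib)

lemma V_strictly_convex: "strictly_convex_Rm m (V \<kappa>)"
  unfolding strictly_convex_Rm_def
proof (intro ballI allI impI)
  fix x y :: "nat \<Rightarrow> real" and t :: real
  assume x: "x \<in> Rm m" and y: "y \<in> Rm m" and "x \<noteq> y" "0 < t" "t < 1"
  define z where "z i = (1 - t) * x i + t * y i" for i
  have z: "z \<in> Rm m"
    using x y by (simp add: Rm_def z_def)
  obtain a where "x a \<noteq> y a"
    using \<open>x \<noteq> y\<close> by (auto simp: fun_eq_iff)
  moreover have "z a - x a = t * (y a - x a)"
    by (simp add: z_def algebra_simps)
  ultimately have "x \<noteq> z"
    using \<open>0 < t\<close> by auto
  define S1 where "S1 = (\<Sum>a=1..m. (x a - z a) * gradient \<kappa> z a)"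
  define S2 where "S2 = (\<Sum>a=1..m. (y a - z a) * gradient \<kappa> z a)"
  have "V \<kappa> z + S1 < V \<kappa> x"
    unfolding S1_def using V_above_tangent[OF z x] \<open>x \<noteq> z\<close> by simp
  from mult_strict_left_mono[OF this, of "1 - t"] \<open>t < 1\<close>
  have "(1 - t) * V \<kappa> z + (1 - t) * S1 < (1 - t) * V \<kappa> x"
    by (simp add: distrib_left)
  moreover have "V \<kappa> z + S2 \<le> V \<kappa> y"
    unfolding S2_def using V_above_tangent[OF z y] by (cases "z = y") (auto intro: less_imp_le)
  from mult_left_mono[OF this, of t] \<open>0 < t\<close>
  have "t * V \<kappa> z + t * S2 \<le> t * V \<kappa> y"
    by (simp add: distrib_left)
  moreover have "(1 - t) * S1 + t * S2 = 0"
    by (simp add: S1_def S2_def sum_distrib_left sum.distrib[symmetric] z_def algebra_simps)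
  moreover have "(1 - t) * V \<kappa> z + t * V \<kappa> z = V \<kappa> z"
    by (simp add: algebra_simps)
  ultimately have "V \<kappa> z < (1 - t) * V \<kappa> x + t * V \<kappa> y"
    by linarith
  then show "V \<kappa> (\<lambda>i. (1 - t) * x i + t * y i) < (1 - t) * V \<kappa> x + t * V \<kappa> y"
    by (simp add: z_def[abs_def])
qed

lemma V_min_at_critical:
  assumes "\<xi> \<in> Rm m" "\<eta> \<in> Rm m" "\<forall>a\<in>{1..m}. gradient \<kappa> \<xi> a = 0"
  shows "V \<kappa> \<xi> \<le> V \<kappa> \<eta>"
  using V_above_tangent[OF assms(1,2), of \<kappa>] assms(3) by (cases "\<xi> = \<eta>") auto

lemma critical_point_unique:
  assumes "\<xi> \<in> Rm m" "\<eta> \<in> Rm m"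
    and "\<forall>a\<in>{1..m}. gradient \<kappa> \<xi> a = 0" "\<forall>a\<in>{1..m}. gradient \<kappa> \<eta> a = 0"
  shows "\<xi> = \<eta>"
proof (rule ccontr)
  assume "\<xi> \<noteq> \<eta>"
  then have "V \<kappa> \<xi> < V \<kappa> \<eta>" "V \<kappa> \<eta> < V \<kappa> \<xi>"
    using V_above_tangent[OF assms(1,2), of \<kappa>] V_above_tangent[OF assms(2,1), of \<kappa>] assms(3,4)
    by simp_all
  then show False by simp
qed

subsection \<open>Partial derivatives and the Hessian\<close>

lemma V_partial_has_real_derivative:
  assumes "j \<in> {1..m}"
  shows "((\<lambda>t. V \<kappa> (\<xi>(j := t))) has_real_derivative gradient \<kappa> \<xi> j) (at (\<xi> j))"
proof -
  have "((\<lambda>t. pair_energy (\<xi>(j := t))) has_real_derivative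
      (\<Sum>a=1..m. \<Sum>b=Suc a..m. v_arctan q (\<xi> a + \<xi> b) * (kron a j + kron b j)
        + v_arctan q (\<xi> a - \<xi> b) * (kron a j - kron b j))) (at (\<xi> j))"
    unfolding pair_energy_def
    by (intro DERIV_sum DERIV_add has_real_derivative_fun_upd_add_comp
        has_real_derivative_fun_upd_diff_comp Phi_has_real_derivative)
  moreover have "((\<lambda>t. \<Sum>a=1..m. self_energy \<kappa> a ((\<xi>(j := t)) a)) has_real_derivative
      (\<Sum>a=1..m. self_energy' \<kappa> a (\<xi> a) * kron a j)) (at (\<xi> j))"
    by (intro DERIV_sum has_real_derivative_fun_upd_comp self_energy_has_real_derivative)
  ultimately have "((\<lambda>t. V \<kappa> (\<xi>(j := t))) has_real_derivative
      (\<Sum>a=1..m. kron a j * pair_gradient \<xi> a) + (\<Sum>a=1..m. self_energy' \<kappa> a (\<xi> a) * kron a j)) (at (\<xi> j))"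
    unfolding V_split sum_pairs_eq_sum_pair_gradient by (rule DERIV_add)
  moreover have "(\<Sum>a=1..m. kron a j * pair_gradient \<xi> a) = pair_gradient \<xi> j"
    using assms by (intro sum_kron_mult) auto
  moreover have "(\<Sum>a=1..m. self_energy' \<kappa> a (\<xi> a) * kron a j) = self_energy' \<kappa> j (\<xi> j)"
    using assms by (intro sum_mult_kron[where f="\<lambda>a. self_energy' \<kappa> a (\<xi> a)"]) auto
  ultimately show ?thesis
    unfolding gradient_def by (simp only: add.commute)
qed

lemma pd_V_eq_gradient: "j \<in> {1..m} \<Longrightarrow> pd (V \<kappa>) \<xi> j = gradient \<kappa> \<xi> j"
  unfolding pd_def by (rule DERIV_imp_deriv[OF V_partial_has_real_derivative])

definition hessian :: "(nat \<Rightarrow> real) \<Rightarrow> nat \<Rightarrow> nat \<Rightarrow> real" where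
  "hessian \<xi> j k = 2 * real n * kron k j + W' (\<xi> k) * kron k j
     + (\<Sum>l\<in>{1..m} - {k}. poisson_kernel q (\<xi> k + \<xi> l) * (kron k j + kron l j)
        + poisson_kernel q (\<xi> k - \<xi> l) * (kron k j - kron l j))"

lemma gradient_partial_has_real_derivative:
  "((\<lambda>t. gradient \<kappa> (\<xi>(j := t)) k) has_real_derivative hessian \<xi> j k) (at (\<xi> j))"
proof -
  have "((\<lambda>t. gradient \<kappa> (\<xi>(j := t)) k) has_real_derivative
      2 * real n * kron k j + W' (\<xi> k) * kron k j - 0
      + (\<Sum>l\<in>{1..m} - {k}. poisson_kernel q (\<xi> k + \<xi> l) * (kron k j + kron l j)
        + poisson_kernel q (\<xi> k - \<xi> l) * (kron k j - kron l j))) (at (\<xi> j))"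
    unfolding gradient_def self_energy'_def pair_gradient_def
    by (intro DERIV_add DERIV_diff DERIV_sum DERIV_const DERIV_cmult has_real_derivative_fun_upd
        has_real_derivative_fun_upd_comp[OF W_has_real_derivative]
        has_real_derivative_fun_upd_add_comp has_real_derivative_fun_upd_diff_comp
        v_arctan_has_real_derivative abs_q)
  then show ?thesis
    by (simp add: hessian_def)
qed

lemma hess_V_eq_hessian:
  assumes "j \<in> {1..m}" "k \<in> {1..m}"
  shows "hess (V \<kappa>) \<xi> j k = hessian \<xi> j k"
proof -
  have "(\<lambda>t. pd (V \<kappa>) (\<xi>(j := t)) k) = (\<lambda>t. gradient \<kappa> (\<xi>(j := t)) k)"
    using pd_V_eq_gradient[OF assms(2)] by simp
  then show ?thesis
    unfolding hess_def pd_def[of "\<lambda>\<eta>. pd (V \<kappa>) \<eta> k"]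
    by (simp add: DERIV_imp_deriv[OF gradient_partial_has_real_derivative])
qed

lemmas continuous_on_v_arctan_q_comp [continuous_intros] = continuous_on_v_arctan_comp[OF abs_q]
lemmas continuous_on_poisson_kernel_q_comp [continuous_intros] = continuous_on_poisson_kernel_comp[OF abs_q]

lemma continuous_on_W_comp [continuous_intros]: "continuous_on S f \<Longrightarrow> continuous_on S (\<lambda>x. W (f x))"
  by (rule continuous_on_compose_UNIV[OF DERIV_imp_continuous_on_UNIV[OF W_has_real_derivative]])

lemma continuous_on_W'_comp [continuous_intros]: "continuous_on S f \<Longrightarrow> continuous_on S (\<lambda>x. W' (f x))"
  unfolding W'_def
  by (intro continuous_intros continuous_on_poisson_kernel_comp abs_pp abs_qp abs_pm abs_qm)

lemma continuous_on_Phi_comp [continuous_intros]: "continuous_on S f \<Longrightarrow> continuous_on S (\<lambda>x. Phi (f x))"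
  by (rule continuous_on_compose_UNIV[OF DERIV_imp_continuous_on_UNIV[OF Phi_has_real_derivative]])

lemma continuous_on_Psi_comp [continuous_intros]: "continuous_on S f \<Longrightarrow> continuous_on S (\<lambda>x. Psi (f x))"
  by (rule continuous_on_compose_UNIV[OF DERIV_imp_continuous_on_UNIV[OF Psi_has_real_derivative]])

lemma continuous_on_gradient: "continuous_on S (\<lambda>\<xi>. gradient \<kappa> \<xi> j)"
  unfolding gradient_def self_energy'_def pair_gradient_def by (intro continuous_intros)

lemma continuous_on_hessian: "continuous_on S (\<lambda>\<xi>. hessian \<xi> j k)"
  unfolding hessian_def by (intro continuous_intros)

lemma continuous_on_V: "continuous_on S (V \<kappa>)"
  unfolding Vfun_def by (intro continuous_intros)

lemma hessian_column_sum:
  assumes k: "k \<in> {1..m}"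
  shows "(\<Sum>j=1..m. h j * hessian \<xi> j k) = 2 * real n * h k + W' (\<xi> k) * h k
     + (\<Sum>l\<in>{1..m} - {k}. poisson_kernel q (\<xi> k + \<xi> l) * (h k + h l)
        + poisson_kernel q (\<xi> k - \<xi> l) * (h k - h l))"
proof -
  have h_kron: "(\<Sum>j=1..m. h j * kron l j) = h l" if "l \<in> {1..m}" for l
    using sum_mult_kron[of "{1..m}" l h] that by (simp add: kron_sym)
  have "(\<Sum>j=1..m. h j * hessian \<xi> j k)
      = 2 * real n * (\<Sum>j=1..m. h j * kron k j) + W' (\<xi> k) * (\<Sum>j=1..m. h j * kron k j)
        + (\<Sum>j=1..m. \<Sum>l\<in>{1..m} - {k}.
            poisson_kernel q (\<xi> k + \<xi> l) * (h j * kron k j) + poisson_kernel q (\<xi> k + \<xi> l) * (h j * kron l j)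
          + (poisson_kernel q (\<xi> k - \<xi> l) * (h j * kron k j) - poisson_kernel q (\<xi> k - \<xi> l) * (h j * kron l j)))"
    unfolding hessian_def by (simp add: sum.distrib sum_distrib_left algebra_simps)
  also have "(\<Sum>j=1..m. \<Sum>l\<in>{1..m} - {k}.
            poisson_kernel q (\<xi> k + \<xi> l) * (h j * kron k j) + poisson_kernel q (\<xi> k + \<xi> l) * (h j * kron l j)
          + (poisson_kernel q (\<xi> k - \<xi> l) * (h j * kron k j) - poisson_kernel q (\<xi> k - \<xi> l) * (h j * kron l j)))
      = (\<Sum>l\<in>{1..m} - {k}.
            poisson_kernel q (\<xi> k + \<xi> l) * (\<Sum>j=1..m. h j * kron k j)
          + poisson_kernel q (\<xi> k + \<xi> l) * (\<Sum>j=1..m. h j * kron l j)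
          + (poisson_kernel q (\<xi> k - \<xi> l) * (\<Sum>j=1..m. h j * kron k j)
            - poisson_kernel q (\<xi> k - \<xi> l) * (\<Sum>j=1..m. h j * kron l j)))"
    by (subst sum.swap) (simp only: sum.distrib sum_subtractf sum_distrib_left)
  also have "\<dots> = (\<Sum>l\<in>{1..m} - {k}. poisson_kernel q (\<xi> k + \<xi> l) * (h k + h l)
        + poisson_kernel q (\<xi> k - \<xi> l) * (h k - h l))"
  proof (intro sum.cong refl)
    fix l
    assume "l \<in> {1..m} - {k}"
    then have "l \<in> {1..m}" by simp
    show "poisson_kernel q (\<xi> k + \<xi> l) * (\<Sum>j=1..m. h j * kron k j)
          + poisson_kernel q (\<xi> k + \<xi> l) * (\<Sum>j=1..m. h j * kron l j)
          + (poisson_kernel q (\<xi> k - \<xi> l) * (\<Sum>j=1..m. h j * kron k j)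
            - poisson_kernel q (\<xi> k - \<xi> l) * (\<Sum>j=1..m. h j * kron l j))
        = poisson_kernel q (\<xi> k + \<xi> l) * (h k + h l) + poisson_kernel q (\<xi> k - \<xi> l) * (h k - h l)"
      unfolding h_kron[OF k] h_kron[OF \<open>l \<in> {1..m}\<close>] by (simp add: algebra_simps)
  qed
  finally show ?thesis
    by (simp only: h_kron[OF k])
qed

definition pair_form :: "(nat \<Rightarrow> real) \<Rightarrow> (nat \<Rightarrow> real) \<Rightarrow> nat \<Rightarrow> nat \<Rightarrow> real" where
  "pair_form \<xi> h k l = poisson_kernel q (\<xi> k + \<xi> l) * (h k * (h k + h l))
     + poisson_kernel q (\<xi> k - \<xi> l) * (h k * (h k - h l))"

lemma hessian_quadratic_form:
  "(\<Sum>j=1..m. h j * (\<Sum>k=1..m. hessian \<xi> j k * h k))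
    = (\<Sum>k=1..m. (2 * real n + W' (\<xi> k)) * (h k)\<^sup>2) + (\<Sum>k=1..m. \<Sum>l\<in>{1..m} - {k}. pair_form \<xi> h k l)"
proof -
  have "(\<Sum>j=1..m. h j * (\<Sum>k=1..m. hessian \<xi> j k * h k))
      = (\<Sum>j=1..m. \<Sum>k=1..m. h k * (h j * hessian \<xi> j k))"
    by (simp add: sum_distrib_left mult_ac)
  also have "\<dots> = (\<Sum>k=1..m. \<Sum>j=1..m. h k * (h j * hessian \<xi> j k))"
    by (rule sum.swap)
  also have "\<dots> = (\<Sum>k=1..m. h k * (\<Sum>j=1..m. h j * hessian \<xi> j k))"
    by (simp only: sum_distrib_left)
  also have "\<dots> = (\<Sum>k=1..m. (2 * real n + W' (\<xi> k)) * (h k)\<^sup>2 + (\<Sum>l\<in>{1..m} - {k}. pair_form \<xi> h k l))"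
  proof (intro sum.cong refl)
    fix k
    assume "k \<in> {1..m}"
    show "h k * (\<Sum>j=1..m. h j * hessian \<xi> j k)
        = (2 * real n + W' (\<xi> k)) * (h k)\<^sup>2 + (\<Sum>l\<in>{1..m} - {k}. pair_form \<xi> h k l)"
      unfolding hessian_column_sum[OF \<open>k \<in> {1..m}\<close>] pair_form_def
      by (simp add: sum_distrib_left algebra_simps power2_eq_square)
  qed
  finally show ?thesis
    by (simp only: sum.distrib)
qed

lemma pair_form_sum_nonneg: "0 \<le> (\<Sum>k=1..m. \<Sum>l\<in>{1..m} - {k}. pair_form \<xi> h k l)"
proof -
  have symmetrized: "pair_form \<xi> h k l + pair_form \<xi> h l k
      = poisson_kernel q (\<xi> k + \<xi> l) * (h k + h l)\<^sup>2 + poisson_kernel q (\<xi> k - \<xi> l) * (h k - h l)\<^sup>2" for k l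
    using poisson_kernel_even[of q "\<xi> k - \<xi> l"]
    by (simp add: pair_form_def add.commute power2_eq_square algebra_simps)
  have "0 \<le> (\<Sum>k=1..m. \<Sum>l\<in>{1..m} - {k}. pair_form \<xi> h k l + pair_form \<xi> h l k)"
    unfolding symmetrized
    by (intro sum_nonneg add_nonneg_nonneg mult_nonneg_nonneg zero_le_power2
        less_imp_le[OF poisson_kernel_bounds(3)[OF abs_q]])
  also have "\<dots> = 2 * (\<Sum>k=1..m. \<Sum>l\<in>{1..m} - {k}. pair_form \<xi> h k l)"
    using sum_offdiag_swap[where m=m and f="pair_form \<xi> h"] by (simp add: sum.distrib)
  finally show ?thesis by simp
qed

lemma hessian_quadratic_form_pos:
  assumes "h \<in> Rm m" "h \<noteq> (\<lambda>_. 0)"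
  shows "0 < (\<Sum>j=1..m. h j * (\<Sum>k=1..m. hessian \<xi> j k * h k))"
proof -
  obtain k where k: "k \<in> {1..m}" "h k \<noteq> 0"
    using Rm_eqI[OF assms(1), of "\<lambda>_. 0"] assms(2) by (auto simp: Rm_def)
  have pos: "0 < 2 * real n + W' (\<xi> a)" for a
    using W_slope_lo_le_W'[of "\<xi> a"] W_slope_lo_pos by simp
  have "0 \<le> (2 * real n + W' (\<xi> a)) * (h a)\<^sup>2" for a
    using pos[of a] by simp
  moreover have "0 < (2 * real n + W' (\<xi> k)) * (h k)\<^sup>2"
    using pos[of k] k(2) by simp
  ultimately have "0 < (\<Sum>k=1..m. (2 * real n + W' (\<xi> k)) * (h k)\<^sup>2)"
    using k(1) by (intro sum_pos2[of "{1..m}" k]) auto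
  then show ?thesis
    unfolding hessian_quadratic_form using pair_form_sum_nonneg[of \<xi> h] by linarith
qed

lemma hess_V_nondegenerate:
  assumes "h \<in> Rm m" "\<forall>j\<in>{1..m}. (\<Sum>k=1..m. hess (V \<kappa>) \<xi> j k * h k) = 0"
  shows "h = (\<lambda>_. 0)"
proof -
  have "(\<Sum>k=1..m. hessian \<xi> j k * h k) = 0" if "j \<in> {1..m}" for j
  proof -
    have "(\<Sum>k=1..m. hessian \<xi> j k * h k) = (\<Sum>k=1..m. hess (V \<kappa>) \<xi> j k * h k)"
      using that by (intro sum.cong) (simp_all add: hess_V_eq_hessian)
    then show ?thesis
      using assms(2) that by simp
  qed
  then have "(\<Sum>j=1..m. h j * (\<Sum>k=1..m. hessian \<xi> j k * h k)) = 0"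
    by simp
  then show ?thesis
    using hessian_quadratic_form_pos[OF assms(1), of \<xi>] by fastforce
qed

lemma V_morse: "morse_Rm m (V \<kappa>)"
  unfolding morse_Rm_def C2_Rm_def
proof (intro conjI ballI impI)
  fix \<xi> :: "nat \<Rightarrow> real" and j
  assume j: "j \<in> {1..m}"
  show "(\<lambda>t. V \<kappa> (\<xi>(j := t))) differentiable at (\<xi> j)"
    using V_partial_has_real_derivative[OF j] real_differentiable_def by blast
  fix k
  assume k: "k \<in> {1..m}"
  have "(\<lambda>t. pd (V \<kappa>) (\<xi>(j := t)) k) = (\<lambda>t. gradient \<kappa> (\<xi>(j := t)) k)"
    using pd_V_eq_gradient[OF k] by simp
  then show "(\<lambda>t. pd (V \<kappa>) (\<xi>(j := t)) k) differentiable at (\<xi> j)"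
    unfolding real_differentiable_def using gradient_partial_has_real_derivative by metis
next
  fix j
  assume "j \<in> {1..m}"
  then show "continuous_on (Rm m) (\<lambda>\<xi>. pd (V \<kappa>) \<xi> j)"
    by (simp add: pd_V_eq_gradient continuous_on_gradient)
next
  fix j k
  assume "j \<in> {1..m}" "k \<in> {1..m}"
  then show "continuous_on (Rm m) (\<lambda>\<xi>. hess (V \<kappa>) \<xi> j k)"
    by (simp add: hess_V_eq_hessian continuous_on_hessian)
next
  fix \<xi> h :: "nat \<Rightarrow> real"
  assume "h \<in> Rm m" "\<forall>j\<in>{1..m}. (\<Sum>k=1..m. hess (V \<kappa>) \<xi> j k * h k) = 0"
  then show "h = (\<lambda>_. 0)"
    by (rule hess_V_nondegenerate)
qed

subsection \<open>Existence and uniqueness of solutions\<close>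

lemma Phi_nonneg: "0 \<le> Phi z"
  using DERIV_strict_mono_above_tangent[OF Phi_has_real_derivative v_arctan_strict_mono[OF abs_q], of 0 z]
  by simp

lemma Psi_lower_bound: "W_slope_lo / 4 * s\<^sup>2 \<le> Psi s"
proof -
  define E where "E s = Psi s - W_slope_lo / 4 * s\<^sup>2" for s
  define E' where "E' s = W s - W_slope_lo / 2 * s" for s
  have "(E has_real_derivative E' x) (at x)" for x
    unfolding E_def[abs_def] E'_def by (auto intro!: derivative_eq_intros Psi_has_real_derivative)
  moreover have "strict_mono E'"
  proof (rule strict_monoI)
    fix y x :: real
    assume "y < x"
    have "W_slope_lo / 2 * (x - y) < W_slope_lo * (x - y)"
      using \<open>y < x\<close> W_slope_lo_pos by simp
    then have "W_slope_lo / 2 * (x - y) < W x - W y"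
      using W_diff_bounds[of y x] \<open>y < x\<close> by linarith
    then show "E' y < E' x"
      unfolding E'_def by (simp add: right_diff_distrib)
  qed
  ultimately have "E 0 + E' 0 * (s - 0) \<le> E s"
    by (rule DERIV_strict_mono_above_tangent)
  then show ?thesis
    by (simp add: E_def E'_def)
qed

lemma self_energy_lower_bound:
  assumes "\<kappa> \<in> Lambda m n" "a \<in> {1..m}"
  shows "W_slope_lo / 8 * s\<^sup>2 - 2 * (2 * pi * (real m + real n))\<^sup>2 / W_slope_lo \<le> self_energy \<kappa> a s"
proof -
  define K where "K = 2 * pi * (real m + real n)"
  have "\<kappa> a \<le> n"
    using assms by (auto simp: Lambda_def)
  then have "0 \<le> rhs \<kappa> a" "rhs \<kappa> a \<le> real m + real n"
    using assms(2) by auto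
  then have "2 * pi * rhs \<kappa> a * s \<le> 2 * pi * rhs \<kappa> a * \<bar>s\<bar>"
    by (intro mult_left_mono) auto
  also have "\<dots> \<le> K * \<bar>s\<bar>"
    unfolding K_def using \<open>rhs \<kappa> a \<le> real m + real n\<close> by (intro mult_right_mono) auto
  finally have "2 * pi * rhs \<kappa> a * s \<le> K * \<bar>s\<bar>" .
  moreover have "W_slope_lo / 8 * s\<^sup>2 - 2 * K\<^sup>2 / W_slope_lo \<le> W_slope_lo / 4 * s\<^sup>2 - K * \<bar>s\<bar>"
    using quadratic_minus_linear_lower_bound[of "W_slope_lo / 4" s K] W_slope_lo_pos by simp
  moreover have "0 \<le> real n * s\<^sup>2"
    by simp
  ultimately show ?thesis
    using Psi_lower_bound[of s] unfolding self_energy_def K_def[symmetric] by linarith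
qed

lemma V_radially_unbounded:
  assumes "\<kappa> \<in> Lambda m n"
  shows "radially_unbounded_Rm m (V \<kappa>)"
proof (rule radially_unbounded_RmI)
  show "0 < W_slope_lo / 8"
    using W_slope_lo_pos by simp
  fix \<xi>
  have "0 \<le> pair_energy \<xi>"
    unfolding pair_energy_def by (intro sum_nonneg add_nonneg_nonneg Phi_nonneg)
  moreover have "(\<Sum>a=1..m. W_slope_lo / 8 * (\<xi> a)\<^sup>2 - 2 * (2 * pi * (real m + real n))\<^sup>2 / W_slope_lo)
      \<le> (\<Sum>a=1..m. self_energy \<kappa> a (\<xi> a))"
    using self_energy_lower_bound[OF assms] by (intro sum_mono) auto
  ultimately show "W_slope_lo / 8 * (\<Sum>a=1..m. (\<xi> a)\<^sup>2) - real m * (2 * (2 * pi * (real m + real n))\<^sup>2 / W_slope_lo)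
      \<le> V \<kappa> \<xi>"
    unfolding V_split by (simp add: sum_subtractf sum_distrib_left)
qed

lemma critical_point_exists:
  assumes "\<kappa> \<in> Lambda m n"
  shows "\<exists>\<xi>\<in>Rm m. \<forall>j\<in>{1..m}. gradient \<kappa> \<xi> j = 0"
proof -
  obtain \<xi> where \<xi>: "\<xi> \<in> Rm m" and min: "\<And>\<eta>. \<eta> \<in> Rm m \<Longrightarrow> V \<kappa> \<xi> \<le> V \<kappa> \<eta>"
    using radially_unbounded_Rm_attains_min[OF continuous_on_V V_radially_unbounded[OF assms]] by blast
  have "gradient \<kappa> \<xi> j = 0" if "j \<in> {1..m}" for j
  proof (rule DERIV_local_min[OF V_partial_has_real_derivative[OF that]])
    show "\<forall>t. \<bar>\<xi> j - t\<bar> < 1 \<longrightarrow> V \<kappa> (\<xi>(j := \<xi> j)) \<le> V \<kappa> (\<xi>(j := t))"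
      using min Rm_fun_upd[OF \<xi> that] by simp
  qed simp
  with \<xi> show ?thesis by blast
qed

lemma bae_unique_solution:
  assumes "\<kappa> \<in> Lambda m n"
  shows "\<exists>!\<xi>. \<xi> \<in> Rm m \<and> bae \<kappa> \<xi>"
  using critical_point_exists[OF assms] critical_point_unique
  unfolding bae_iff_gradient by blast

lemma bae_solution_minimizes_V:
  assumes "\<xi> \<in> Rm m" "bae \<kappa> \<xi>" "\<eta> \<in> Rm m"
  shows "V \<kappa> \<xi> \<le> V \<kappa> \<eta>"
  using V_min_at_critical assms unfolding bae_iff_gradient by blast

lemma bae_solution_determines_kappa:
  assumes "\<kappa> \<in> Lambda m n" "\<kappa>' \<in> Lambda m n" "bae \<kappa> \<xi>" "bae \<kappa>' \<xi>"
  shows "\<kappa> = \<kappa>'"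
proof
  fix j
  show "\<kappa> j = \<kappa>' j"
  proof (cases "j \<in> {1..m}")
    case True
    then have "gradient \<kappa> \<xi> j = gradient \<kappa>' \<xi> j"
      using assms(3,4) unfolding bae_iff_gradient by simp
    then show ?thesis
      by (simp add: gradient_def self_energy'_def)
  qed (use assms(1,2) in \<open>simp add: Lambda_def\<close>)
qed

subsection \<open>Localisation of the solutions\<close>

lemma Kplus_eq: "Kplus m q pp qp pm qm = (real m - 1) * ratio q + W_slope_hi / 2"
  unfolding Kplus_def W_slope_hi_def by simp

lemma Kminus_eq: "Kminus m q pp qp pm qm = (real m - 1) * inverse (ratio q) + W_slope_lo / 2"
  unfolding Kminus_def W_slope_lo_def by simp

lemma n_plus_Kplus_pos:
  assumes "1 \<le> m"
  shows "0 < real n + Kplus m q pp qp pm qm"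
proof -
  have "0 \<le> (real m - 1) * ratio q"
    using assms ratio_pos[OF abs_q] by simp
  then show ?thesis
    unfolding Kplus_eq using W_slope_hi_pos of_nat_0_le_iff[of n] by linarith
qed

lemma n_plus_Kminus_pos:
  assumes "1 \<le> m"
  shows "0 < real n + Kminus m q pp qp pm qm"
proof -
  have "0 \<le> (real m - 1) * inverse (ratio q)"
    using assms ratio_pos[OF abs_q] by simp
  then show ?thesis
    unfolding Kminus_eq using W_slope_lo_pos of_nat_0_le_iff[of n] by linarith
qed

lemma pair_gradient_eq_sum_diff:
  "pair_gradient \<xi> j = (\<Sum>l\<in>{1..m} - {j}. v_arctan q (\<xi> l + \<xi> j) - v_arctan q (\<xi> l - \<xi> j))"
  unfolding pair_gradient_def
proof (intro sum.cong refl)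
  fix l
  have "v_arctan q (\<xi> j - \<xi> l) = - v_arctan q (\<xi> l - \<xi> j)"
    using v_arctan_minus[of q "\<xi> l - \<xi> j"] by simp
  then show "v_arctan q (\<xi> j + \<xi> l) + v_arctan q (\<xi> j - \<xi> l)
      = v_arctan q (\<xi> l + \<xi> j) - v_arctan q (\<xi> l - \<xi> j)"
    by (simp add: add.commute)
qed

lemma pair_gradient_bounds:
  assumes "j \<in> {1..m}" "0 \<le> \<xi> j"
  shows "(real m - 1) * (inverse (ratio q) * (2 * \<xi> j)) \<le> pair_gradient \<xi> j
    \<and> pair_gradient \<xi> j \<le> (real m - 1) * (ratio q * (2 * \<xi> j))"
proof -
  have "inverse (ratio q) * (2 * \<xi> j) \<le> v_arctan q (\<xi> l + \<xi> j) - v_arctan q (\<xi> l - \<xi> j)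
      \<and> v_arctan q (\<xi> l + \<xi> j) - v_arctan q (\<xi> l - \<xi> j) \<le> ratio q * (2 * \<xi> j)" for l
    using v_arctan_diff_bounds[OF abs_q, of "\<xi> l - \<xi> j" "\<xi> l + \<xi> j"] assms(2) by simp
  then show ?thesis
    unfolding pair_gradient_eq_sum_diff real_card_Icc_Diff_singleton[OF assms(1), symmetric]
    by (intro conjI sum_bounded_below sum_bounded_above) auto
qed

lemma pair_gradient_nonpos: "\<xi> j \<le> 0 \<Longrightarrow> pair_gradient \<xi> j \<le> 0"
  unfolding pair_gradient_eq_sum_diff by (intro sum_nonpos) (simp add: v_q_mono)

lemma pair_gradient_ge:
  assumes "j \<in> {1..m}" "pi \<le> \<xi> j"
  shows "(real m - 1) * (2 * pi) \<le> pair_gradient \<xi> j"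
  unfolding pair_gradient_def real_card_Icc_Diff_singleton[OF assms(1), symmetric]
proof (rule sum_bounded_below)
  fix l
  have "v_arctan q (pi + \<xi> l) + v_arctan q (pi - \<xi> l) = 2 * pi"
    by (rule v_arctan_pi_reflect)
  moreover have "v_arctan q (pi + \<xi> l) \<le> v_arctan q (\<xi> j + \<xi> l)" "v_arctan q (pi - \<xi> l) \<le> v_arctan q (\<xi> j - \<xi> l)"
    using assms(2) by (simp_all add: v_q_mono)
  ultimately show "2 * pi \<le> v_arctan q (\<xi> j + \<xi> l) + v_arctan q (\<xi> j - \<xi> l)"
    by linarith
qed

lemma bae_solution_eq:
  assumes "bae \<kappa> \<xi>" "j \<in> {1..m}"
  shows "2 * real n * \<xi> j + W (\<xi> j) + pair_gradient \<xi> j = 2 * pi * rhs \<kappa> j"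
proof -
  have "gradient \<kappa> \<xi> j = 0"
    using assms bae_iff_gradient by blast
  then show ?thesis
    unfolding gradient_def self_energy'_def by linarith
qed

lemma bae_solution_pos:
  assumes "bae \<kappa> \<xi>" "j \<in> {1..m}"
  shows "0 < \<xi> j"
proof (rule ccontr)
  assume "\<not> 0 < \<xi> j"
  then have "2 * real n * \<xi> j \<le> 0" "W (\<xi> j) \<le> 0" "pair_gradient \<xi> j \<le> 0"
    using W_mono[of "\<xi> j" 0] pair_gradient_nonpos[of \<xi> j] by (simp_all add: mult_nonneg_nonpos)
  moreover have "0 < 2 * pi * rhs \<kappa> j"
    using assms(2) by simp
  ultimately show False
    using bae_solution_eq[OF assms] by linarith
qed

lemma bae_solution_less_pi:
  assumes "\<kappa> \<in> Lambda m n" "bae \<kappa> \<xi>" "j \<in> {1..m}"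
  shows "\<xi> j < pi"
proof (rule ccontr)
  assume "\<not> \<xi> j < pi"
  then have "2 * real n * pi \<le> 2 * real n * \<xi> j" "4 * pi \<le> W (\<xi> j)"
      "(real m - 1) * (2 * pi) \<le> pair_gradient \<xi> j"
    using W_mono[of pi "\<xi> j"] pair_gradient_ge[where \<xi>=\<xi>, OF assms(3)]
    by (simp_all add: mult_left_mono)
  moreover have "2 * pi * (real m + real n + 1) = 2 * real n * pi + 4 * pi + (real m - 1) * (2 * pi)"
    by (simp add: algebra_simps)
  moreover have "\<kappa> j \<le> n"
    using assms(1,3) by (auto simp: Lambda_def)
  then have "2 * pi * rhs \<kappa> j < 2 * pi * (real m + real n + 1)"
    using assms(3) by simp
  ultimately show False
    using bae_solution_eq[OF assms(2,3)] by linarith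
qed

lemma bae_solution_coordinate_estimate:
  assumes "bae \<kappa> \<xi>" "j \<in> {1..m}"
  shows "(real n + Kminus m q pp qp pm qm) * \<xi> j \<le> pi * rhs \<kappa> j
    \<and> pi * rhs \<kappa> j \<le> (real n + Kplus m q pp qp pm qm) * \<xi> j"
proof -
  have pos: "0 < \<xi> j"
    by (rule bae_solution_pos[OF assms])
  note pair = pair_gradient_bounds[where \<xi>=\<xi>, OF assms(2) less_imp_le[OF pos]]
  have W: "W_slope_lo * \<xi> j \<le> W (\<xi> j)" "W (\<xi> j) \<le> W_slope_hi * \<xi> j"
    using W_diff_bounds[of 0 "\<xi> j"] pos by simp_all
  have eq: "pi * rhs \<kappa> j = (2 * real n * \<xi> j + W (\<xi> j) + pair_gradient \<xi> j) / 2"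
    using bae_solution_eq[OF assms] by simp
  have "(real n + Kminus m q pp qp pm qm) * \<xi> j
      = (2 * real n * \<xi> j + W_slope_lo * \<xi> j + (real m - 1) * (inverse (ratio q) * (2 * \<xi> j))) / 2"
    unfolding Kminus_eq by (simp add: algebra_simps)
  also have "\<dots> \<le> pi * rhs \<kappa> j"
    unfolding eq using W(1) pair by (intro divide_right_mono add_mono) auto
  finally have lower: "(real n + Kminus m q pp qp pm qm) * \<xi> j \<le> pi * rhs \<kappa> j" .
  have "pi * rhs \<kappa> j
      \<le> (2 * real n * \<xi> j + W_slope_hi * \<xi> j + (real m - 1) * (ratio q * (2 * \<xi> j))) / 2"
    unfolding eq using W(2) pair by (intro divide_right_mono add_mono) auto
  also have "\<dots> = (real n + Kplus m q pp qp pm qm) * \<xi> j"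
    unfolding Kplus_eq by (simp add: field_simps)
  finally show ?thesis
    using lower by simp
qed

lemma pair_gradient_diff_eq:
  assumes "j \<in> {1..m}" "k \<in> {1..m}" "j \<noteq> k"
  shows "pair_gradient \<xi> j - pair_gradient \<xi> k = 2 * v_arctan q (\<xi> j - \<xi> k)
    + (\<Sum>l\<in>{1..m} - {j, k}. (v_arctan q (\<xi> j + \<xi> l) + v_arctan q (\<xi> j - \<xi> l))
        - (v_arctan q (\<xi> k + \<xi> l) + v_arctan q (\<xi> k - \<xi> l)))"
proof -
  define B where "B = {1..m} - {j, k}"
  have "{1..m} - {j} = insert k B" "{1..m} - {k} = insert j B" "j \<notin> B" "k \<notin> B" "finite B"
    using assms by (auto simp: B_def)
  then have "pair_gradient \<xi> j - pair_gradient \<xi> k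
      = (v_arctan q (\<xi> j + \<xi> k) + v_arctan q (\<xi> j - \<xi> k)) - (v_arctan q (\<xi> k + \<xi> j) + v_arctan q (\<xi> k - \<xi> j))
        + (\<Sum>l\<in>B. (v_arctan q (\<xi> j + \<xi> l) + v_arctan q (\<xi> j - \<xi> l))
          - (v_arctan q (\<xi> k + \<xi> l) + v_arctan q (\<xi> k - \<xi> l)))"
    unfolding pair_gradient_def by (simp add: sum_subtractf)
  moreover have "v_arctan q (\<xi> k - \<xi> j) = - v_arctan q (\<xi> j - \<xi> k)"
    using v_arctan_minus[of q "\<xi> j - \<xi> k"] by simp
  moreover have "v_arctan q (\<xi> k + \<xi> j) = v_arctan q (\<xi> j + \<xi> k)"
    by (simp add: add.commute)
  ultimately show ?thesis
    unfolding B_def[symmetric] by linarith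
qed

lemma pair_gradient_diff_bounds:
  assumes "j \<in> {1..m}" "k \<in> {1..m}" "j \<noteq> k" "\<xi> k \<le> \<xi> j"
  shows "(real m - 1) * (inverse (ratio q) * (2 * (\<xi> j - \<xi> k))) \<le> pair_gradient \<xi> j - pair_gradient \<xi> k"
    and "pair_gradient \<xi> j - pair_gradient \<xi> k \<le> (real m - 1) * (ratio q * (2 * (\<xi> j - \<xi> k)))"
proof -
  define d where "d = \<xi> j - \<xi> k"
  define S where "S = (\<Sum>l\<in>{1..m} - {j, k}. (v_arctan q (\<xi> j + \<xi> l) + v_arctan q (\<xi> j - \<xi> l))
        - (v_arctan q (\<xi> k + \<xi> l) + v_arctan q (\<xi> k - \<xi> l)))"
  have summand: "2 * (inverse (ratio q) * d) \<le> (v_arctan q (\<xi> j + \<xi> l) + v_arctan q (\<xi> j - \<xi> l))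
        - (v_arctan q (\<xi> k + \<xi> l) + v_arctan q (\<xi> k - \<xi> l))"
      "(v_arctan q (\<xi> j + \<xi> l) + v_arctan q (\<xi> j - \<xi> l))
        - (v_arctan q (\<xi> k + \<xi> l) + v_arctan q (\<xi> k - \<xi> l)) \<le> 2 * (ratio q * d)" for l
  proof -
    have "inverse (ratio q) * d \<le> v_arctan q (\<xi> j + \<xi> l) - v_arctan q (\<xi> k + \<xi> l)"
        "v_arctan q (\<xi> j + \<xi> l) - v_arctan q (\<xi> k + \<xi> l) \<le> ratio q * d"
      using v_arctan_diff_bounds[OF abs_q, of "\<xi> k + \<xi> l" "\<xi> j + \<xi> l"] assms(4)
      by (simp_all add: d_def)
    moreover have "inverse (ratio q) * d \<le> v_arctan q (\<xi> j - \<xi> l) - v_arctan q (\<xi> k - \<xi> l)"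
        "v_arctan q (\<xi> j - \<xi> l) - v_arctan q (\<xi> k - \<xi> l) \<le> ratio q * d"
      using v_arctan_diff_bounds[OF abs_q, of "\<xi> k - \<xi> l" "\<xi> j - \<xi> l"] assms(4)
      by (simp_all add: d_def)
    ultimately show "2 * (inverse (ratio q) * d) \<le> (v_arctan q (\<xi> j + \<xi> l) + v_arctan q (\<xi> j - \<xi> l))
        - (v_arctan q (\<xi> k + \<xi> l) + v_arctan q (\<xi> k - \<xi> l))"
      "(v_arctan q (\<xi> j + \<xi> l) + v_arctan q (\<xi> j - \<xi> l))
        - (v_arctan q (\<xi> k + \<xi> l) + v_arctan q (\<xi> k - \<xi> l)) \<le> 2 * (ratio q * d)"
      by linarith+
  qed
  have "(real m - 2) * (2 * (inverse (ratio q) * d)) \<le> S"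
    unfolding S_def real_card_Icc_Diff_doubleton[OF assms(1-3), symmetric]
    by (rule sum_bounded_below, rule summand(1))
  moreover have "S \<le> (real m - 2) * (2 * (ratio q * d))"
    unfolding S_def real_card_Icc_Diff_doubleton[OF assms(1-3), symmetric]
    by (rule sum_bounded_above, rule summand(2))
  moreover have "inverse (ratio q) * d \<le> v_arctan q d" "v_arctan q d \<le> ratio q * d"
    using v_arctan_diff_bounds[OF abs_q, of 0 d] assms(4) by (simp_all add: d_def)
  moreover have "(real m - 1) * (inverse (ratio q) * (2 * d))
      = (real m - 2) * (2 * (inverse (ratio q) * d)) + 2 * (inverse (ratio q) * d)"
    "(real m - 1) * (ratio q * (2 * d)) = (real m - 2) * (2 * (ratio q * d)) + 2 * (ratio q * d)"
    by (simp_all add: algebra_simps)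
  ultimately show "(real m - 1) * (inverse (ratio q) * (2 * (\<xi> j - \<xi> k))) \<le> pair_gradient \<xi> j - pair_gradient \<xi> k"
    "pair_gradient \<xi> j - pair_gradient \<xi> k \<le> (real m - 1) * (ratio q * (2 * (\<xi> j - \<xi> k)))"
    unfolding pair_gradient_diff_eq[OF assms(1-3)] d_def[symmetric] S_def[symmetric] by linarith+
qed

lemma pair_gradient_diff_nonpos:
  assumes "j \<in> {1..m}" "k \<in> {1..m}" "j \<noteq> k" "\<xi> j \<le> \<xi> k"
  shows "pair_gradient \<xi> j - pair_gradient \<xi> k \<le> 0"
proof -
  have "v_arctan q (\<xi> j - \<xi> k) \<le> 0"
    using v_q_mono[of "\<xi> j - \<xi> k" 0] assms(4) by simp
  moreover have "(\<Sum>l\<in>{1..m} - {j, k}. (v_arctan q (\<xi> j + \<xi> l) + v_arctan q (\<xi> j - \<xi> l))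
        - (v_arctan q (\<xi> k + \<xi> l) + v_arctan q (\<xi> k - \<xi> l))) \<le> 0"
    using assms(4) by (intro sum_nonpos) (simp add: add_mono v_q_mono)
  ultimately show ?thesis
    unfolding pair_gradient_diff_eq[OF assms(1-3)] by linarith
qed

lemma bae_solution_diff_eq:
  assumes "bae \<kappa> \<xi>" "j \<in> {1..m}" "k \<in> {1..m}"
  shows "2 * real n * (\<xi> j - \<xi> k) + (W (\<xi> j) - W (\<xi> k)) + (pair_gradient \<xi> j - pair_gradient \<xi> k)
    = 2 * pi * (real k - real j + real (\<kappa> j) - real (\<kappa> k))"
proof -
  have "2 * pi * (real k - real j + real (\<kappa> j) - real (\<kappa> k)) = 2 * pi * rhs \<kappa> j - 2 * pi * rhs \<kappa> k"
    "2 * real n * (\<xi> j - \<xi> k) = 2 * real n * \<xi> j - 2 * real n * \<xi> k"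
    by (simp_all add: algebra_simps)
  then show ?thesis
    using bae_solution_eq[OF assms(1,2)] bae_solution_eq[OF assms(1,3)] by linarith
qed

lemma bae_solution_decreasing:
  assumes "\<kappa> \<in> Lambda m n" "bae \<kappa> \<xi>" "1 \<le> j" "j < k" "k \<le> m"
  shows "\<xi> k < \<xi> j"
proof (rule ccontr)
  have j: "j \<in> {1..m}" and k: "k \<in> {1..m}"
    using assms(3-5) by auto
  assume "\<not> \<xi> k < \<xi> j"
  then have "2 * real n * (\<xi> j - \<xi> k) \<le> 0" "W (\<xi> j) - W (\<xi> k) \<le> 0"
      "pair_gradient \<xi> j - pair_gradient \<xi> k \<le> 0"
    using W_mono[of "\<xi> j" "\<xi> k"] pair_gradient_diff_nonpos[OF j k] assms(4)
    by (simp_all add: mult_nonneg_nonpos)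
  moreover have "\<kappa> k \<le> \<kappa> j"
    using assms(1,3-5) by (auto simp: Lambda_def)
  then have "0 < 2 * pi * (real k - real j + real (\<kappa> j) - real (\<kappa> k))"
    using assms(4) by simp
  ultimately show False
    using bae_solution_diff_eq[OF assms(2) j k] by linarith
qed

lemma bae_solution_gap_estimate:
  assumes "\<kappa> \<in> Lambda m n" "bae \<kappa> \<xi>" "1 \<le> j" "j < k" "k \<le> m"
  shows "(real n + Kminus m q pp qp pm qm) * (\<xi> j - \<xi> k) \<le> pi * (real k - real j + real (\<kappa> j) - real (\<kappa> k))
    \<and> pi * (real k - real j + real (\<kappa> j) - real (\<kappa> k)) \<le> (real n + Kplus m q pp qp pm qm) * (\<xi> j - \<xi> k)"
proof -
  have j: "j \<in> {1..m}" and k: "k \<in> {1..m}" and "j \<noteq> k"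
    using assms(3-5) by auto
  have le: "\<xi> k \<le> \<xi> j"
    using bae_solution_decreasing[OF assms] by simp
  note pair = pair_gradient_diff_bounds[where \<xi>=\<xi>, OF j k \<open>j \<noteq> k\<close> le]
  have W: "W_slope_lo * (\<xi> j - \<xi> k) \<le> W (\<xi> j) - W (\<xi> k)" "W (\<xi> j) - W (\<xi> k) \<le> W_slope_hi * (\<xi> j - \<xi> k)"
    using W_diff_bounds[OF le] by simp_all
  have eq: "pi * (real k - real j + real (\<kappa> j) - real (\<kappa> k))
      = (2 * real n * (\<xi> j - \<xi> k) + (W (\<xi> j) - W (\<xi> k)) + (pair_gradient \<xi> j - pair_gradient \<xi> k)) / 2"
    using bae_solution_diff_eq[OF assms(2) j k] by simp
  have "(real n + Kminus m q pp qp pm qm) * (\<xi> j - \<xi> k)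
      = (2 * real n * (\<xi> j - \<xi> k) + W_slope_lo * (\<xi> j - \<xi> k)
        + (real m - 1) * (inverse (ratio q) * (2 * (\<xi> j - \<xi> k)))) / 2"
    unfolding Kminus_eq by (simp add: field_simps)
  also have "\<dots> \<le> pi * (real k - real j + real (\<kappa> j) - real (\<kappa> k))"
    unfolding eq using W(1) pair(1) by (intro divide_right_mono add_mono) auto
  finally have lower: "(real n + Kminus m q pp qp pm qm) * (\<xi> j - \<xi> k)
      \<le> pi * (real k - real j + real (\<kappa> j) - real (\<kappa> k))" .
  have "pi * (real k - real j + real (\<kappa> j) - real (\<kappa> k))
      \<le> (2 * real n * (\<xi> j - \<xi> k) + W_slope_hi * (\<xi> j - \<xi> k)
        + (real m - 1) * (ratio q * (2 * (\<xi> j - \<xi> k)))) / 2"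
    unfolding eq using W(2) pair(2) by (intro divide_right_mono add_mono) auto
  also have "\<dots> = (real n + Kplus m q pp qp pm qm) * (\<xi> j - \<xi> k)"
    unfolding Kplus_eq by (simp add: field_simps)
  finally show ?thesis
    using lower by simp
qed

lemma bae_solution_coordinate_bounds:
  assumes "bae \<kappa> \<xi>" "j \<in> {1..m}"
  shows "pi * rhs \<kappa> j / (real n + Kplus m q pp qp pm qm) \<le> \<xi> j"
    and "\<xi> j \<le> pi * rhs \<kappa> j / (real n + Kminus m q pp qp pm qm)"
  using divide_bounds_of_mult_bounds[OF n_plus_Kminus_pos n_plus_Kplus_pos] bae_solution_coordinate_estimate[OF assms]
    assms(2) by auto

lemma bae_solution_gap_bounds:
  assumes "\<kappa> \<in> Lambda m n" "bae \<kappa> \<xi>" "1 \<le> j" "j < k" "k \<le> m"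
  shows "pi * (real k - real j + real (\<kappa> j) - real (\<kappa> k)) / (real n + Kplus m q pp qp pm qm) \<le> \<xi> j - \<xi> k"
    and "\<xi> j - \<xi> k \<le> pi * (real k - real j + real (\<kappa> j) - real (\<kappa> k)) / (real n + Kminus m q pp qp pm qm)"
  using divide_bounds_of_mult_bounds[OF n_plus_Kminus_pos n_plus_Kplus_pos] bae_solution_gap_estimate[OF assms]
    assms(3-5) by auto

end

theorem proposition4p1:
  fixes m n :: nat and q pp qp pm qm :: real
  assumes "q \<in> {-1<..<1} - {0}"
    and "pp \<in> {-1<..<1} - {0}" and "qp \<in> {-1<..<1} - {0}"
    and "pm \<in> {-1<..<1} - {0}" and "qm \<in> {-1<..<1} - {0}"
  shows
    "(\<forall>\<kappa>\<in>Lambda m n.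
        (\<exists>!\<xi>. \<xi> \<in> Rm m \<and> BAE m n q pp qp pm qm \<kappa> \<xi>)
      \<and> strictly_convex_Rm m (Vfun m n q pp qp pm qm \<kappa>)
      \<and> radially_unbounded_Rm m (Vfun m n q pp qp pm qm \<kappa>)
      \<and> morse_Rm m (Vfun m n q pp qp pm qm \<kappa>)
      \<and> (\<forall>\<xi>\<in>Rm m. BAE m n q pp qp pm qm \<kappa> \<xi> \<longrightarrow>
           (\<forall>\<eta>\<in>Rm m. Vfun m n q pp qp pm qm \<kappa> \<xi> \<le> Vfun m n q pp qp pm qm \<kappa> \<eta>)))
   \<and> (\<forall>\<kappa>\<in>Lambda m n. \<forall>\<kappa>'\<in>Lambda m n. \<forall>\<xi>\<in>Rm m. \<forall>\<xi>'\<in>Rm m.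
        BAE m n q pp qp pm qm \<kappa> \<xi> \<longrightarrow> BAE m n q pp qp pm qm \<kappa>' \<xi>' \<longrightarrow> \<kappa> \<noteq> \<kappa>' \<longrightarrow> \<xi> \<noteq> \<xi>')
   \<and> (\<forall>\<kappa>\<in>Lambda m n. \<forall>\<xi>\<in>Rm m. BAE m n q pp qp pm qm \<kappa> \<xi> \<longrightarrow>
        (\<forall>j\<in>{1..m}. 0 < \<xi> j \<and> \<xi> j < pi)
      \<and> (\<forall>j k. 1 \<le> j \<longrightarrow> j < k \<longrightarrow> k \<le> m \<longrightarrow> \<xi> k < \<xi> j)
      \<and> (\<forall>j\<in>{1..m}.
           pi * (real m + 1 - real j + real (\<kappa> j)) / (real n + Kplus m q pp qp pm qm) \<le> \<xi> j
         \<and> \<xi> j \<le> pi * (real m + 1 - real j + real (\<kappa> j)) / (real n + Kminus m q pp qp pm qm))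
      \<and> (\<forall>j k. 1 \<le> j \<longrightarrow> j < k \<longrightarrow> k \<le> m \<longrightarrow>
           pi * (real k - real j + real (\<kappa> j) - real (\<kappa> k)) / (real n + Kplus m q pp qp pm qm)
             \<le> \<xi> j - \<xi> k
         \<and> \<xi> j - \<xi> k
             \<le> pi * (real k - real j + real (\<kappa> j) - real (\<kappa> k)) / (real n + Kminus m q pp qp pm qm)))"
proof -
  interpret bae_parameters m n q pp qp pm qm
    using assms by unfold_locales auto
  show ?thesis
    by (intro conjI ballI allI impI)
      (auto intro: V_radially_unbounded bae_solution_minimizes_V bae_solution_pos
        bae_solution_less_pi bae_solution_decreasing bae_solution_coordinate_bounds bae_solution_gap_bounds
        simp: bae_unique_solution V_strictly_convex V_morse dest: bae_solution_determines_kappa)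
qed

end
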